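(* The map $Res_{V/V_0}$ is the unique $R_{\Delta_0}$-linear map $$res:R_\Delta\otimes\wedge^rV\to R_{\Delta_0}\otimes\wedge^{r-1}V_0$$ such that, for every $\omega\in\wedge^rV$: 1. for every $\beta\in\Delta_1$, $res(\beta^{-1}\otimes\omega)=(d\beta)^{-1}\wedge\omega$; 2. $res(S(V)\otimes\omega)=0$; 3. $res(m_\nu\otimes\omega)=0$ for every sequence $\nu\subset\Delta_1$ of length strictly greater than $1$.
   Context: Let $k$ be a field of characteristic zero, $V$ a $k$-vector space of dimension $r$, and $V^*$ its dual. $S(V)$ is identified with polynomial functions on $V^*$. Let $\Delta\subset V$ be a finite set of nonzero vectors spanning $V$, and $R_\Delta=\Delta^{-1}S(V)$ the ring of rational functions on $V^*$ obtained by inverting the elements of $\Delta$. Let $V_0\subset V$ be a hyperplane. Set $\Delta_0=\Delta\cap V_0$ and $\Delta_1=\Delta\setminus\Delta_0$. Let $R_{\Delta_0}=\Delta_0^{-1}S(V_0)$, viewed as a subalgebra of $R_\Delta$ (via $S(V_0)\subset S(V)$), so that $R_\Delta\otimes\wedge^rV$ is an $R_{\Delta_0}$-module. For a finite sequence $\nu=(\alpha_1,\dots,\alpha_L)$ of elements of $\Delta$ (repetitions allowed), set $m_\nu=1/\prod_{j=1}^L\alpha_j$; write $\nu\subset\Delta_1$ if all $\alpha_j\in\Delta_1$. For $\beta\in\Delta_1$ and $\omega\in\wedge^rV$, let $(d\beta)^{-1}\wedge\omega$ denote the unique $\omega_0\in\wedge^{r-1}V_0$ with $\omega=\beta\wedge\omega_0$.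 Residue along $V_0$: choose a nonzero $z_0\in V^*$ vanishing on $V_0$. For $\omega\in\wedge^rV$, let $\omega_0=\iota(z_0)\omega\in\wedge^{r-1}V_0$ be the contraction. Define $$Res_{V/V_0}(\phi\otimes\omega)=\psi\otimes\omega_0,\qquad \psi(z)=-\operatorname{Res}_{t=\infty}\big(\phi(z+tz_0)\,dt\big)\quad (z\in V^* ).$$ Here $\psi$ depends only on the image of $z$ in $V^*/kz_0=V_0^*$, and the definition is independent of the choice of $z_0$. *)

theory Defs
  imports "HOL-Combinatorics.Permutations" "HOL-Computational_Algebra.Polynomial"
begin

(* Conventions.
   k = 'a :: field_char_0.  V = 'n \<Rightarrow> 'a  (r = CARD('n)), and V^* is also modelled
   as 'n \<Rightarrow> 'a, with the perfect pairing  pair v z = \<Sum>i. v i * z i.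
   An element v of V is thus the linear function  z \<mapsto> pair v z  on V^*. *)

definition pair :: "('n::finite \<Rightarrow> 'a::comm_ring_1) \<Rightarrow> ('n \<Rightarrow> 'a) \<Rightarrow> 'a" where
  "pair v z = (\<Sum>i\<in>UNIV. v i * z i)"

(* S(W) for a subspace W of V, as polynomial functions on V^*: the k-algebra of
   functions generated by the linear functions given by elements of W.
   S(V) = polyfun UNIV, S(V_0) = polyfun V0. *)
inductive_set polyfun :: "('n::finite \<Rightarrow> 'a::field) set \<Rightarrow> (('n \<Rightarrow> 'a) \<Rightarrow> 'a) set"
  for W where
  const: "(\<lambda>z. c) \<in> polyfun W"
| lin: "v \<in> W \<Longrightarrow> (\<lambda>z. pair v z) \<in> polyfun W"
| add: "f \<in> polyfun W \<Longrightarrow> g \<in> polyfun W \<Longrightarrow> (\<lambda>z. f z + g z) \<in> polyfun W"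
| mult: "f \<in> polyfun W \<Longrightarrow> g \<in> polyfun W \<Longrightarrow> (\<lambda>z. f z * g z) \<in> polyfun W"

definition off :: "('n::finite \<Rightarrow> 'a::comm_ring_1) set \<Rightarrow> ('n \<Rightarrow> 'a) \<Rightarrow> bool" where
  "off D z \<longleftrightarrow> (\<forall>\<alpha>\<in>D. pair \<alpha> z \<noteq> 0)"

(* D^{-1} S(W), as functions on V^*; a rational function is represented by any total
   function agreeing with it off the hyperplanes of D (values there are irrelevant).
   R_Delta = ratfun UNIV Delta,  R_{Delta_0} = ratfun V0 Delta0. *)
definition ratfun :: "('n::finite \<Rightarrow> 'a::field) set \<Rightarrow> ('n \<Rightarrow> 'a) set \<Rightarrow> (('n \<Rightarrow> 'a) \<Rightarrow> 'a) set" where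
  "ratfun W D = {f. \<exists>P\<in>polyfun W. \<exists>e::('n \<Rightarrow> 'a) \<Rightarrow> nat.
      \<forall>z. off D z \<longrightarrow> f z = P z / (\<Prod>\<alpha>\<in>D. pair \<alpha> z ^ e \<alpha>)}"

(* An element of \<wedge>^m V is represented (canonically) by the alternating
   m-linear form it defines on V^*, i.e. as a function of a tuple  xi :: nat \<Rightarrow> V^*
   (only xi 0, ..., xi (m-1) matter):
     (w_0 \<and> ... \<and> w_{m-1}) (xi) = det (pair (w_j) (xi i))_{i,j<m}. *)
definition wedge_vecs :: "nat \<Rightarrow> (nat \<Rightarrow> 'n::finite \<Rightarrow> 'a::comm_ring_1) \<Rightarrow> (nat \<Rightarrow> 'n \<Rightarrow> 'a) \<Rightarrow> 'a" where
  "wedge_vecs m w xi = (\<Sum>p | p permutes {..<m}. of_int (sign p) * (\<Prod>i<m. pair (w (p i)) (xi i)))"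

(* \<wedge>^m W for a subspace W of dimension m (top degree, so every element is a
   scalar multiple of a wedge of m vectors of W); viewed inside \<wedge>^m V.
   (The scalar is needed only for m = 0, where \<wedge>^0 W = k.) *)
definition top_ext :: "nat \<Rightarrow> ('n::finite \<Rightarrow> 'a::comm_ring_1) set \<Rightarrow> ((nat \<Rightarrow> 'n \<Rightarrow> 'a) \<Rightarrow> 'a) set" where
  "top_ext m W = {(\<lambda>xi. c * wedge_vecs m w xi) | c w. \<forall>i<m. w i \<in> W}"

definition skip :: "nat \<Rightarrow> (nat \<Rightarrow> 'b) \<Rightarrow> nat \<Rightarrow> 'b" where
  "skip i xi = (\<lambda>j. if j < i then xi j else xi (Suc j))"

definition tcons :: "'b \<Rightarrow> (nat \<Rightarrow> 'b) \<Rightarrow> nat \<Rightarrow> 'b" where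
  "tcons x eta = (\<lambda>j. case j of 0 \<Rightarrow> x | Suc j' \<Rightarrow> eta j')"

(* beta \<and> omega0, for omega0 of degree m-1, as a form of degree m *)
definition wedge_left :: "nat \<Rightarrow> ('n::finite \<Rightarrow> 'a::comm_ring_1) \<Rightarrow> ((nat \<Rightarrow> 'n \<Rightarrow> 'a) \<Rightarrow> 'a)
    \<Rightarrow> (nat \<Rightarrow> 'n \<Rightarrow> 'a) \<Rightarrow> 'a" where
  "wedge_left m \<beta> \<omega>0 xi = (\<Sum>i<m. (-1)^i * pair \<beta> (xi i) * \<omega>0 (skip i xi))"

(* (d beta)^{-1} \<and> omega : the unique omega0 \<in> \<wedge>^{r-1} V0 with omega = beta \<and> omega0 *)
definition dinv :: "nat \<Rightarrow> ('n::finite \<Rightarrow> 'a::comm_ring_1) set \<Rightarrow> ('n \<Rightarrow> 'a)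
    \<Rightarrow> ((nat \<Rightarrow> 'n \<Rightarrow> 'a) \<Rightarrow> 'a) \<Rightarrow> ((nat \<Rightarrow> 'n \<Rightarrow> 'a) \<Rightarrow> 'a)" where
  "dinv r V0 \<beta> \<omega> = (THE \<omega>0. \<omega>0 \<in> top_ext (r - 1) V0 \<and> wedge_left r \<beta> \<omega>0 = \<omega>)"

(* - Res_{t=\<infinity>} (f(t) dt) for a one-variable rational function f = p/q (f given up to
   finitely many values): the coefficient of t^{-1} in the expansion of f at infinity,
   which is  coeff (p mod q) (deg q - 1) / lead_coeff q. *)
definition neg_res_inf :: "('a::field \<Rightarrow> 'a) \<Rightarrow> 'a" where
  "neg_res_inf f = (THE c. \<exists>p q. q \<noteq> 0 \<and> finite {t. f t \<noteq> poly p t / poly q t} \<and>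
       c = coeff (p mod q) (degree q - 1) / lead_coeff q)"

(* Tensor products R \<otimes> L, with L one-dimensional (top exterior power): elements
   phi \<otimes> omega represented as  (z, xi) \<mapsto> phi z * omega xi. *)
definition tens :: "(('n \<Rightarrow> 'a) \<Rightarrow> 'a::comm_ring_1) set \<Rightarrow> ((nat \<Rightarrow> 'n \<Rightarrow> 'a) \<Rightarrow> 'a) set
    \<Rightarrow> (('n \<Rightarrow> 'a) \<Rightarrow> (nat \<Rightarrow> 'n \<Rightarrow> 'a) \<Rightarrow> 'a) set" where
  "tens R L = {(\<lambda>z xi. \<phi> z * \<omega> xi) | \<phi> \<omega>. \<phi> \<in> R \<and> \<omega> \<in> L}"

(* equality of elements of (D^{-1}S) \<otimes> L : equality off the hyperplanes of D *)
definition eq_off :: "('n::finite \<Rightarrow> 'a::comm_ring_1) set \<Rightarrow> (('n \<Rightarrow> 'a) \<Rightarrow> (nat \<Rightarrow> 'n \<Rightarrow> 'a) \<Rightarrow> 'a)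
    \<Rightarrow> (('n \<Rightarrow> 'a) \<Rightarrow> (nat \<Rightarrow> 'n \<Rightarrow> 'a) \<Rightarrow> 'a) \<Rightarrow> bool" where
  "eq_off D \<Phi> \<Psi> \<longleftrightarrow> (\<forall>z. off D z \<longrightarrow> (\<forall>xi. \<Phi> z xi = \<Psi> z xi))"

(* Res_{V/V0}(phi \<otimes> omega) = psi \<otimes> iota(z0) omega, psi(z) = -Res_{t=\<infinity>} phi(z + t z0) dt.
   Here Phi(z', tcons z0 eta) = phi(z') * (iota(z0) omega)(eta). *)
definition Res :: "('n::finite \<Rightarrow> 'a::field) \<Rightarrow> (('n \<Rightarrow> 'a) \<Rightarrow> (nat \<Rightarrow> 'n \<Rightarrow> 'a) \<Rightarrow> 'a)
    \<Rightarrow> (('n \<Rightarrow> 'a) \<Rightarrow> (nat \<Rightarrow> 'n \<Rightarrow> 'a) \<Rightarrow> 'a)" where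
  "Res z0 \<Phi> = (\<lambda>z eta. neg_res_inf (\<lambda>t. \<Phi> (\<lambda>i. z i + t * z0 i) (tcons z0 eta)))"

definition R0_linear ::
  "(('n::finite \<Rightarrow> 'a::comm_ring_1) \<Rightarrow> 'a) set
   \<Rightarrow> (('n \<Rightarrow> 'a) \<Rightarrow> (nat \<Rightarrow> 'n \<Rightarrow> 'a) \<Rightarrow> 'a) set \<Rightarrow> ('n \<Rightarrow> 'a) set
   \<Rightarrow> (('n \<Rightarrow> 'a) \<Rightarrow> (nat \<Rightarrow> 'n \<Rightarrow> 'a) \<Rightarrow> 'a) set \<Rightarrow> ('n \<Rightarrow> 'a) set
   \<Rightarrow> ((('n \<Rightarrow> 'a) \<Rightarrow> (nat \<Rightarrow> 'n \<Rightarrow> 'a) \<Rightarrow> 'a) \<Rightarrow> (('n \<Rightarrow> 'a) \<Rightarrow> (nat \<Rightarrow> 'n \<Rightarrow> 'a) \<Rightarrow> 'a))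
   \<Rightarrow> bool" where
  "R0_linear R0 Dom D Cod D0 res \<longleftrightarrow>
     (\<forall>\<Phi>\<in>Dom. \<exists>\<Psi>\<in>Cod. eq_off D0 (res \<Phi>) \<Psi>) \<and>
     (\<forall>\<Phi>\<in>Dom. \<forall>\<Psi>\<in>Dom. eq_off D \<Phi> \<Psi> \<longrightarrow> eq_off D0 (res \<Phi>) (res \<Psi>)) \<and>
     (\<forall>\<Phi>\<in>Dom. \<forall>\<Psi>\<in>Dom.
        eq_off D0 (res (\<lambda>z xi. \<Phi> z xi + \<Psi> z xi)) (\<lambda>z eta. res \<Phi> z eta + res \<Psi> z eta)) \<and>
     (\<forall>\<psi>\<in>R0. \<forall>\<Phi>\<in>Dom.
        eq_off D0 (res (\<lambda>z xi. \<psi> z * \<Phi> z xi)) (\<lambda>z eta. \<psi> z * res \<Phi> z eta))"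

(* properties 1--3 of the theorem; r = dim V, Delta0 = Delta \<inter> V0, Delta1 = Delta - V0 *)
definition res_props :: "nat \<Rightarrow> ('n::finite \<Rightarrow> 'a::field) set \<Rightarrow> ('n \<Rightarrow> 'a) set
   \<Rightarrow> ((('n \<Rightarrow> 'a) \<Rightarrow> (nat \<Rightarrow> 'n \<Rightarrow> 'a) \<Rightarrow> 'a) \<Rightarrow> (('n \<Rightarrow> 'a) \<Rightarrow> (nat \<Rightarrow> 'n \<Rightarrow> 'a) \<Rightarrow> 'a))
   \<Rightarrow> bool" where
  "res_props r \<Delta> V0 res \<longleftrightarrow>
     (\<forall>\<omega>\<in>top_ext r UNIV.
       (\<forall>\<beta>\<in>\<Delta> - V0.
          eq_off (\<Delta> \<inter> V0) (res (\<lambda>z xi. inverse (pair \<beta> z) * \<omega> xi)) (\<lambda>z eta. dinv r V0 \<beta> \<omega> eta)) \<and>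
       (\<forall>P\<in>polyfun UNIV.
          eq_off (\<Delta> \<inter> V0) (res (\<lambda>z xi. P z * \<omega> xi)) (\<lambda>z eta. 0)) \<and>
       (\<forall>\<nu>. set \<nu> \<subseteq> \<Delta> - V0 \<and> length \<nu> > 1 \<longrightarrow>
          eq_off (\<Delta> \<inter> V0) (res (\<lambda>z xi. inverse (\<Prod>\<alpha>\<leftarrow>\<nu>. pair \<alpha> z) * \<omega> xi)) (\<lambda>z eta. 0)))"

end

theory Submission
  imports Defs "HOL-Library.Cardinality" "Jordan_Normal_Form.Determinant"
begin

(* Restricted to a line z + t z0 with z off the hyperplanes of \<Delta>0, an element of R_\<Delta> is a rational
   function of t whose poles come from \<Delta>1 only, while elements of R_\<Delta>0 are constant in t.
   Res is the t^-1 coefficient of the expansion at t = \<infinity>, so it is R_\<Delta>0-linear, kills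
   polynomials and every m_\<nu> with |\<nu>| \<ge> 2 (denominator of degree \<ge> 2), and sends \<beta>^-1 \<otimes> \<omega> to
   \<iota>(z0) \<omega> / <\<beta>, z0>, which is (d\<beta>)^-1 \<and> \<omega> by the Laplace expansion of \<beta> \<and> \<iota>(z0) \<omega>.
   Uniqueness comes from partial fractions along V0: every v \<in> V is v' + a \<beta> with v' \<in> V0 and
   \<beta> \<in> \<Delta>1, so R_\<Delta> is spanned over R_\<Delta>0 by S(V) and the m_\<nu> with \<nu> \<subseteq> \<Delta>1 nonempty; on these
   the values of an R_\<Delta>0-linear map are fixed by properties 1-3. *)

type_synonym ('n, 'a) form = "(nat \<Rightarrow> 'n \<Rightarrow> 'a) \<Rightarrow> 'a"
type_synonym ('n, 'a) tensor = "('n \<Rightarrow> 'a) \<Rightarrow> ('n, 'a) form"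

section \<open>Residue at infinity of a rational function of one variable\<close>

definition neg_res_inf_frac :: "'a::field poly \<Rightarrow> 'a poly \<Rightarrow> 'a" where
  "neg_res_inf_frac p q = coeff (p mod q) (degree q - 1) / lead_coeff q"

definition is_rational_fun :: "('a::field \<Rightarrow> 'a) \<Rightarrow> bool" where
  "is_rational_fun f \<longleftrightarrow> (\<exists>p q. q \<noteq> 0 \<and> finite {t. f t \<noteq> poly p t / poly q t})"

lemma coeff_mult_degree_add:
  fixes b s :: "'a::field poly"
  assumes "degree b \<le> n"
  shows "coeff (b * s) (n + degree s) = coeff b n * lead_coeff s"
proof (cases "degree b = n \<or> s = 0")
  case True
  then show ?thesis using coeff_mult_degree_sum[of b s] by auto
next
  case False
  with assms have "degree b < n" by simp
  moreover from this have "degree (b * s) < n + degree s"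
    using degree_mult_le[of b s] by linarith
  ultimately show ?thesis by (simp add: coeff_eq_0)
qed

lemma neg_res_inf_frac_mult_mult:
  fixes p q s :: "'a::field poly"
  assumes q: "q \<noteq> 0" and s: "s \<noteq> 0"
  shows "neg_res_inf_frac (p * s) (q * s) = neg_res_inf_frac p q"
proof (cases "degree q = 0")
  case True
  then have "p mod q = 0" using degree_mod_less[OF q, of p] by auto
  then show ?thesis unfolding neg_res_inf_frac_def by (simp add: mod_mult_mult2)
next
  case False
  have "degree (p mod q) \<le> degree q - 1"
    using degree_mod_less[OF q, of p] False by auto
  moreover have "degree (q * s) - 1 = (degree q - 1) + degree s"
    using degree_mult_eq[OF q s] False by simp
  ultimately have "coeff ((p * s) mod (q * s)) (degree (q * s) - 1)
      = coeff (p mod q) (degree q - 1) * lead_coeff s"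
    by (simp add: mod_mult_mult2 coeff_mult_degree_add)
  then show ?thesis using s unfolding neg_res_inf_frac_def lead_coeff_mult by simp
qed

lemma poly_eq_0_if_finite_nonroots:
  fixes p :: "'a::field_char_0 poly"
  assumes "finite {t. poly p t \<noteq> 0}"
  shows "p = 0"
proof (rule ccontr)
  assume "p \<noteq> 0"
  then have "finite ({t. poly p t = 0} \<union> {t. poly p t \<noteq> 0})"
    using assms poly_roots_finite by blast
  moreover have "{t. poly p t = 0} \<union> {t. poly p t \<noteq> 0} = UNIV" by blast
  ultimately show False using infinite_UNIV_char_0[where 'a = 'a] by simp
qed

lemma neg_res_inf_frac_unique:
  fixes p q p' q' :: "'a::field_char_0 poly"
  assumes q: "q \<noteq> 0" and q': "q' \<noteq> 0"
    and f: "finite {t. f t \<noteq> poly p t / poly q t}"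
    and f': "finite {t. f t \<noteq> poly p' t / poly q' t}"
  shows "neg_res_inf_frac p q = neg_res_inf_frac p' q'"
proof -
  have "{t. poly (p * q' - p' * q) t \<noteq> 0} \<subseteq>
      {t. f t \<noteq> poly p t / poly q t} \<union> {t. f t \<noteq> poly p' t / poly q' t} \<union>
      {t. poly q t = 0} \<union> {t. poly q' t = 0}" (is "_ \<subseteq> ?B")
  proof (rule subsetI, rule ccontr)
    fix t assume "t \<in> {t. poly (p * q' - p' * q) t \<noteq> 0}" and "t \<notin> ?B"
    then have "poly p t * poly q' t \<noteq> poly p' t * poly q t" "poly q t \<noteq> 0" "poly q' t \<noteq> 0"
      and "poly p t / poly q t = poly p' t / poly q' t" by auto
    then show False by (simp add: field_simps)
  qed
  moreover have "finite ?B" using f f' poly_roots_finite[OF q] poly_roots_finite[OF q'] by simp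
  ultimately have "finite {t. poly (p * q' - p' * q) t \<noteq> 0}" by (rule finite_subset)
  then have "p * q' - p' * q = 0" by (rule poly_eq_0_if_finite_nonroots)
  then have cross: "p * q' = p' * q" by simp
  have "neg_res_inf_frac p q = neg_res_inf_frac (p * q') (q * q')" using neg_res_inf_frac_mult_mult[OF q q'] by simp
  also have "\<dots> = neg_res_inf_frac (p' * q) (q' * q)" using cross by (simp add: mult.commute)
  also have "\<dots> = neg_res_inf_frac p' q'" using neg_res_inf_frac_mult_mult[OF q' q] by simp
  finally show ?thesis .
qed

lemma neg_res_inf_eq_frac:
  fixes f :: "'a::field_char_0 \<Rightarrow> 'a"
  assumes q: "q \<noteq> 0" and f: "finite {t. f t \<noteq> poly p t / poly q t}"
  shows "neg_res_inf f = neg_res_inf_frac p q"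
  unfolding neg_res_inf_def
proof (rule the_equality)
  fix c
  assume "\<exists>p' q'. q' \<noteq> 0 \<and> finite {t. f t \<noteq> poly p' t / poly q' t} \<and>
    c = coeff (p' mod q') (degree q' - 1) / lead_coeff q'"
  then show "c = neg_res_inf_frac p q"
    using neg_res_inf_frac_unique[OF q _ f] unfolding neg_res_inf_frac_def by metis
qed (use q f in \<open>auto simp: neg_res_inf_frac_def\<close>)

lemma neg_res_inf_cong:
  assumes "finite {t. f t \<noteq> g t}"
  shows "neg_res_inf f = neg_res_inf g"
proof -
  have "finite {t. f t \<noteq> h t} \<longleftrightarrow> finite {t. g t \<noteq> h t}" for h
  proof -
    have "{t. f t \<noteq> h t} \<subseteq> {t. f t \<noteq> g t} \<union> {t. g t \<noteq> h t}"
      and "{t. g t \<noteq> h t} \<subseteq> {t. f t \<noteq> g t} \<union> {t. f t \<noteq> h t}" by auto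
    then show ?thesis using assms by (meson finite_Un finite_subset)
  qed
  then show ?thesis unfolding neg_res_inf_def by simp
qed

lemma is_rational_fun_cmult:
  assumes "is_rational_fun f"
  shows "is_rational_fun (\<lambda>t. c * f t)"
proof -
  obtain p q where "q \<noteq> 0" and "finite {t. f t \<noteq> poly p t / poly q t}"
    using assms unfolding is_rational_fun_def by blast
  moreover have "{t. c * f t \<noteq> poly (Polynomial.smult c p) t / poly q t} \<subseteq> {t. f t \<noteq> poly p t / poly q t}"
    by auto
  ultimately show ?thesis unfolding is_rational_fun_def by (blast intro: finite_subset)
qed

lemma is_rational_fun_cmult_right:
  assumes "is_rational_fun f"
  shows "is_rational_fun (\<lambda>t. f t * c)"
  using is_rational_fun_cmult[OF assms, of c] by (simp only: mult.commute[of c])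

lemma neg_res_inf_cmult:
  fixes f :: "'a::field_char_0 \<Rightarrow> 'a"
  assumes "is_rational_fun f"
  shows "neg_res_inf (\<lambda>t. c * f t) = c * neg_res_inf f"
proof -
  obtain p q where q: "q \<noteq> 0" and fq: "finite {t. f t \<noteq> poly p t / poly q t}"
    using assms unfolding is_rational_fun_def by blast
  have "finite {t. c * f t \<noteq> poly (Polynomial.smult c p) t / poly q t}"
    by (rule finite_subset[OF _ fq]) auto
  from neg_res_inf_eq_frac[OF q this] neg_res_inf_eq_frac[OF q fq] show ?thesis
    unfolding neg_res_inf_frac_def by (simp add: mod_smult_left)
qed

lemma neg_res_inf_add:
  fixes f g :: "'a::field_char_0 \<Rightarrow> 'a"
  assumes "is_rational_fun f" "is_rational_fun g"
  shows "neg_res_inf (\<lambda>t. f t + g t) = neg_res_inf f + neg_res_inf g"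
proof -
  obtain p q where q: "q \<noteq> 0" and fq: "finite {t. f t \<noteq> poly p t / poly q t}"
    using assms(1) unfolding is_rational_fun_def by blast
  obtain p' q' where q': "q' \<noteq> 0" and gq': "finite {t. g t \<noteq> poly p' t / poly q' t}"
    using assms(2) unfolding is_rational_fun_def by blast
  have "{t. f t + g t \<noteq> poly (p * q' + p' * q) t / poly (q * q') t} \<subseteq>
      {t. f t \<noteq> poly p t / poly q t} \<union> {t. g t \<noteq> poly p' t / poly q' t} \<union>
      {t. poly q t = 0} \<union> {t. poly q' t = 0}" (is "_ \<subseteq> ?B")
    by (auto simp: field_simps)
  moreover have "finite ?B" using fq gq' poly_roots_finite[OF q] poly_roots_finite[OF q'] by simp
  ultimately have "finite {t. f t + g t \<noteq> poly (p * q' + p' * q) t / poly (q * q') t}"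
    by (rule finite_subset)
  then have "neg_res_inf (\<lambda>t. f t + g t) = neg_res_inf_frac (p * q' + p' * q) (q * q')"
    using q q' by (intro neg_res_inf_eq_frac) simp_all
  also have "\<dots> = neg_res_inf_frac (p * q') (q * q') + neg_res_inf_frac (p' * q) (q' * q)"
    unfolding neg_res_inf_frac_def by (simp add: poly_mod_add_left add_divide_distrib mult.commute)
  also have "\<dots> = neg_res_inf f + neg_res_inf g"
    using neg_res_inf_frac_mult_mult[OF q q'] neg_res_inf_frac_mult_mult[OF q' q]
      neg_res_inf_eq_frac[OF q fq] neg_res_inf_eq_frac[OF q' gq'] by simp
  finally show ?thesis .
qed

lemma neg_res_inf_poly:
  fixes p :: "'a::field_char_0 poly"
  shows "neg_res_inf (\<lambda>t. poly p t) = 0"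
  using neg_res_inf_eq_frac[of 1 "\<lambda>t. poly p t" p] unfolding neg_res_inf_frac_def by simp

lemma neg_res_inf_inverse_poly:
  fixes q :: "'a::field_char_0 poly"
  assumes q: "q \<noteq> 0"
  shows "neg_res_inf (\<lambda>t. inverse (poly q t)) = (if degree q = 1 then 1 / lead_coeff q else 0)"
proof -
  have "neg_res_inf (\<lambda>t. inverse (poly q t)) = neg_res_inf_frac 1 q"
    by (rule neg_res_inf_eq_frac[OF q]) (simp add: inverse_eq_divide)
  moreover have "1 mod q = (if degree q = 0 then 0 else 1)"
    using degree_mod_less[OF q, of 1] by (auto intro: mod_poly_less)
  ultimately show ?thesis unfolding neg_res_inf_frac_def by auto
qed

lemma neg_res_inf_inverse_linear:
  fixes a b :: "'a::field_char_0"
  assumes "b \<noteq> 0"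
  shows "neg_res_inf (\<lambda>t. inverse (a + t * b)) = 1 / b"
  using neg_res_inf_inverse_poly[of "[:a, b:]"] assms by (simp add: algebra_simps)

lemma prod_list_linear_poly:
  fixes A B :: "'b \<Rightarrow> 'a::idom"
  assumes "\<forall>x\<in>set xs. B x \<noteq> 0"
  shows "(\<Prod>x\<leftarrow>xs. [:A x, B x:]) \<noteq> 0 \<and> degree (\<Prod>x\<leftarrow>xs. [:A x, B x:]) = length xs"
  using assms
proof (induction xs)
  case (Cons x xs)
  then have "[:A x, B x:] \<noteq> 0" "degree [:A x, B x:] = 1" by auto
  with Cons show ?case by (simp del: mult_pCons_left add: degree_mult_eq)
qed simp

lemma neg_res_inf_inverse_prod_linear:
  fixes A B :: "'b \<Rightarrow> 'a::field_char_0"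
  assumes "\<forall>x\<in>set xs. B x \<noteq> 0" and "length xs > 1"
  shows "neg_res_inf (\<lambda>t. inverse (\<Prod>x\<leftarrow>xs. A x + t * B x)) = 0"
proof -
  define q where "q = (\<Prod>x\<leftarrow>xs. [:A x, B x:])"
  have q: "q \<noteq> 0" "degree q = length xs"
    using prod_list_linear_poly[OF assms(1)] unfolding q_def by auto
  have "poly q t = (\<Prod>x\<leftarrow>xs. A x + t * B x)" for t
    unfolding q_def by (induction xs) (simp_all add: algebra_simps)
  then have "neg_res_inf (\<lambda>t. inverse (\<Prod>x\<leftarrow>xs. A x + t * B x)) = neg_res_inf (\<lambda>t. inverse (poly q t))"
    by simp
  also have "\<dots> = 0" using neg_res_inf_inverse_poly[OF q(1)] q(2) assms(2) by simp
  finally show ?thesis .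
qed

section \<open>Alternating forms\<close>

definition contract :: "('n \<Rightarrow> 'a) \<Rightarrow> ('n, 'a) form \<Rightarrow> ('n, 'a) form" where
  "contract z \<omega> = (\<lambda>\<eta>. \<omega> (tcons z \<eta>))"

lemma wedge_vecs_eq_det: "wedge_vecs m w xi = det (mat m m (\<lambda>(i, j). pair (w j) (xi i)))"
proof -
  have "det (mat m m (\<lambda>(i, j). pair (w j) (xi i))) =
     (\<Sum>p | p permutes {0..<m}. of_int (sign p) * (\<Prod>i = 0..<m. mat m m (\<lambda>(i, j). pair (w j) (xi i)) $$ (i, p i)))"
    by (rule det_def') simp
  also have "\<dots> = (\<Sum>p | p permutes {..<m}. of_int (sign p) * (\<Prod>i<m. pair (w (p i)) (xi i)))"
  proof (rule sum.cong)
    fix p assume "p \<in> {p. p permutes {..<m}}"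
    then have "i < m \<Longrightarrow> p i < m" for i using permutes_in_image by fastforce
    then show "of_int (sign p) * (\<Prod>i = 0..<m. mat m m (\<lambda>(i, j). pair (w j) (xi i)) $$ (i, p i)) =
        of_int (sign p) * (\<Prod>i<m. pair (w (p i)) (xi i))"
      by (auto simp: atLeast0LessThan intro!: prod.cong)
  qed (simp add: atLeast0LessThan)
  finally show ?thesis unfolding wedge_vecs_def by simp
qed

lemma tcons_0 [simp]: "tcons x \<eta> 0 = x"
  and tcons_Suc [simp]: "tcons x \<eta> (Suc j) = \<eta> j"
  by (simp_all add: tcons_def)

lemma skip_0_tcons [simp]: "skip 0 (tcons x \<eta>) = \<eta>"
  by (simp add: skip_def tcons_def)

lemma skip_Suc_tcons [simp]: "skip (Suc i) (tcons x \<eta>) = tcons x (skip i \<eta>)"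
  by (rule ext) (simp add: skip_def tcons_def split: nat.split)

lemma pair_diff: "pair (\<lambda>i. a i - c * b i) z = pair a z - c * pair b z"
  unfolding pair_def by (simp add: algebra_simps sum_subtractf sum_distrib_left)

lemma pair_translate: "pair v (\<lambda>i. z i + t * z0 i) = pair v z + t * pair v z0"
  unfolding pair_def by (simp add: algebra_simps sum.distrib sum_distrib_left)

text \<open>More than \<open>CARD('n)\<close> vectors are dependent: the matrix factors through \<open>CARD('n)\<close> coordinates.\<close>

lemma det_pair_mat_Suc_card_eq_0:
  fixes y u :: "nat \<Rightarrow> 'n::finite \<Rightarrow> 'a::comm_ring_1"
  shows "det (mat (Suc CARD('n)) (Suc CARD('n)) (\<lambda>(i, j). pair (u j) (y i))) = 0"
proof -
  let ?r = "CARD('n)"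
  obtain g where g: "bij_betw g {0..<?r} (UNIV :: 'n set)"
    using ex_bij_betw_nat_finite[of "UNIV :: 'n set"] by auto
  define Y where "Y = mat (Suc ?r) (Suc ?r) (\<lambda>(i, l). if l < ?r then y i (g l) else 0)"
  define U where "U = mat (Suc ?r) (Suc ?r) (\<lambda>(l, j). if l < ?r then u j (g l) else 0)"
  have Y: "Y \<in> carrier_mat (Suc ?r) (Suc ?r)" and U: "U \<in> carrier_mat (Suc ?r) (Suc ?r)"
    unfolding Y_def U_def by auto
  have "Y * U = mat (Suc ?r) (Suc ?r) (\<lambda>(i, j). pair (u j) (y i))"
  proof (rule eq_matI)
    fix i j assume "i < dim_row (mat (Suc ?r) (Suc ?r) (\<lambda>(i, j). pair (u j) (y i)))"
      and "j < dim_col (mat (Suc ?r) (Suc ?r) (\<lambda>(i, j). pair (u j) (y i)))"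
    then have i: "i < Suc ?r" and j: "j < Suc ?r" by auto
    have "(Y * U) $$ (i, j) = (\<Sum>l<?r. y i (g l) * u j (g l))"
      using i j Y U by (simp add: scalar_prod_def Y_def U_def atLeast0LessThan lessThan_Suc)
    also have "\<dots> = (\<Sum>n\<in>UNIV. y i n * u j n)"
      using sum.reindex_bij_betw[OF g, of "\<lambda>n. y i n * u j n"] by (simp add: atLeast0LessThan)
    finally show "(Y * U) $$ (i, j) = mat (Suc ?r) (Suc ?r) (\<lambda>(i, j). pair (u j) (y i)) $$ (i, j)"
      using i j unfolding pair_def by (simp add: mult.commute)
  qed (use Y U in auto)
  moreover have "det Y = 0"
    using laplace_expansion_column[OF Y, of ?r] by (simp add: Y_def)
  ultimately show ?thesis using det_mult[OF Y U] by simp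
qed

lemma wedge_left_top_eq_0:
  fixes \<beta> :: "'n::finite \<Rightarrow> 'a::comm_ring_1"
  shows "wedge_left (Suc CARD('n)) \<beta> (wedge_vecs CARD('n) w) y = 0"
proof -
  let ?r = "CARD('n)"
  let ?M = "mat (Suc ?r) (Suc ?r) (\<lambda>(i, j). pair (tcons \<beta> w j) (y i))"
  have M: "?M \<in> carrier_mat (Suc ?r) (Suc ?r)" by auto
  have "det ?M = (\<Sum>k<Suc ?r. ?M $$ (k, 0) * cofactor ?M k 0)"
    by (rule laplace_expansion_column[OF M]) simp
  also have "\<dots> = wedge_left (Suc ?r) \<beta> (wedge_vecs ?r w) y"
    unfolding wedge_left_def
  proof (rule sum.cong[OF refl])
    fix k assume k: "k \<in> {..<Suc ?r}"
    have "mat_delete ?M k 0 = mat ?r ?r (\<lambda>(i, j). pair (w j) (skip k y i))"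
      by (rule eq_matI) (use k in \<open>auto simp: mat_delete_def skip_def\<close>)
    then show "?M $$ (k, 0) * cofactor ?M k 0 = (-1)^k * pair \<beta> (y k) * wedge_vecs ?r w (skip k y)"
      using k by (simp add: cofactor_def wedge_vecs_eq_det)
  qed
  finally show ?thesis using det_pair_mat_Suc_card_eq_0[of "tcons \<beta> w" y] by simp
qed

lemma wedge_vecs_eq_0_if_annihilated:
  assumes "m \<ge> 1" and "\<forall>j<m. pair (w j) (xi 0) = 0"
  shows "wedge_vecs m w xi = 0"
  unfolding wedge_vecs_def
proof (rule sum.neutral, rule ballI)
  fix p assume "p \<in> {p. p permutes {..<m}}"
  then have "p 0 < m" using assms(1) permutes_in_image by fastforce
  then have "(\<Prod>i<m. pair (w (p i)) (xi i)) = 0"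
    using assms by (intro prod_zero) auto
  then show "of_int (sign p) * (\<Prod>i<m. pair (w (p i)) (xi i)) = 0" by simp
qed

lemma det_pair_mat_subtract_column_multiples:
  fixes w :: "nat \<Rightarrow> 'n::finite \<Rightarrow> 'a::field"
  assumes k: "k < m" and S: "S \<subseteq> {..<m}"
  shows "det (mat m m (\<lambda>(i, j). pair (if j \<in> S \<and> j \<noteq> k then (\<lambda>l. w j l - c j * w k l) else w j) (xi i)))
     = det (mat m m (\<lambda>(i, j). pair (w j) (xi i)))"
  using finite_subset[OF S finite_lessThan] S
proof (induction S rule: finite_induct)
  case (insert j S)
  let ?M = "\<lambda>S. mat m m (\<lambda>(i, l). pair (if l \<in> S \<and> l \<noteq> k then (\<lambda>i. w l i - c l * w k i) else w l) (xi i))"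
  show ?case
  proof (cases "j = k")
    case True
    then have "?M (insert j S) = ?M S" by (intro eq_matI) auto
    then show ?thesis using insert by simp
  next
    case False
    have "?M (insert j S) = addcol (- c j) j k (?M S)"
      by (rule eq_matI) (use insert False k in \<open>auto simp: mat_addcol_def pair_diff\<close>)
    moreover have "det (addcol (- c j) j k (?M S)) = det (?M S)"
      by (rule det_addcol[OF k]) (use False in auto)
    ultimately show ?thesis using insert by simp
  qed
qed simp

text \<open>Column reduction: subtracting multiples of a column \<open>k\<close> with \<open>pair (w k) z \<noteq> 0\<close>
  makes the first row of the matrix of \<open>wedge_vecs m w (tcons z \<eta>)\<close> vanish outside column \<open>k\<close>.\<close>

lemma contract_wedge_vecs_reduce:
  fixes w :: "nat \<Rightarrow> 'n::finite \<Rightarrow> 'a::field"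
  assumes k: "k < m" and wk: "pair (w k) z \<noteq> 0"
  shows "\<exists>v. (\<forall>i<m - 1. pair (v i) z = 0) \<and>
    (\<forall>\<eta>. wedge_vecs m w (tcons z \<eta>) = (pair (w k) z * (-1)^k) * wedge_vecs (m - 1) v \<eta>)"
proof -
  define c where "c = (\<lambda>j. pair (w j) z / pair (w k) z)"
  define u where "u = (\<lambda>j. if j \<in> {..<m} \<and> j \<noteq> k then (\<lambda>i. w j i - c j * w k i) else w j)"
  define v where "v = (\<lambda>j. u (if j < k then j else Suc j))"
  have uz: "pair (u j) z = 0" if "j < m" "j \<noteq> k" for j
    using that wk pair_diff[of "w j" "c j" "w k" z] unfolding u_def c_def by auto
  have "\<forall>\<eta>. wedge_vecs m w (tcons z \<eta>) = (pair (w k) z * (-1)^k) * wedge_vecs (m - 1) v \<eta>"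
  proof
    fix \<eta>
    let ?N = "mat m m (\<lambda>(i, j). pair (u j) (tcons z \<eta> i))"
    have N: "?N \<in> carrier_mat m m" by simp
    have "wedge_vecs m w (tcons z \<eta>) = det ?N"
      unfolding wedge_vecs_eq_det u_def by (rule det_pair_mat_subtract_column_multiples[OF k, symmetric]) simp
    also have "\<dots> = (\<Sum>j<m. ?N $$ (0, j) * cofactor ?N 0 j)"
      by (rule laplace_expansion_row[OF N]) (use k in simp)
    also have "\<dots> = (\<Sum>j<m. if j = k then pair (w k) z * cofactor ?N 0 k else 0)"
      by (rule sum.cong[OF refl]) (use uz k in \<open>auto simp: u_def\<close>)
    also have "\<dots> = pair (w k) z * cofactor ?N 0 k" using k by simp
    also have "mat_delete ?N 0 k = mat (m - 1) (m - 1) (\<lambda>(i, j). pair (v j) (\<eta> i))"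
      by (rule eq_matI) (auto simp: mat_delete_def v_def)
    then have "cofactor ?N 0 k = (-1)^k * wedge_vecs (m - 1) v \<eta>"
      by (simp add: cofactor_def wedge_vecs_eq_det)
    finally show "wedge_vecs m w (tcons z \<eta>) = (pair (w k) z * (-1)^k) * wedge_vecs (m - 1) v \<eta>"
      by simp
  qed
  moreover have "\<forall>i<m - 1. pair (v i) z = 0" unfolding v_def using uz by auto
  ultimately show ?thesis by (intro exI[of _ v] conjI)
qed

lemma contract_wedge_vecs_in_top_ext:
  fixes w :: "nat \<Rightarrow> 'n::finite \<Rightarrow> 'a::field"
  assumes m: "m \<ge> 1"
  shows "contract z (wedge_vecs m w) \<in> top_ext (m - 1) {v. pair v z = 0}"
proof (cases "\<forall>j<m. pair (w j) z = 0")
  case True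
  then have "wedge_vecs m w (tcons z \<eta>) = 0" for \<eta>
    by (intro wedge_vecs_eq_0_if_annihilated[OF m]) simp
  then have "contract z (wedge_vecs m w) = (\<lambda>\<eta>. 0 * wedge_vecs (m - 1) (\<lambda>_ _. 0) \<eta>)"
    unfolding contract_def by simp
  moreover have "\<forall>i<m - 1. (\<lambda>_. 0) \<in> {v. pair v z = (0::'a)}" by (simp add: pair_def)
  ultimately show ?thesis unfolding top_ext_def by blast
next
  case False
  then obtain k where k: "k < m" and wk: "pair (w k) z \<noteq> 0" by auto
  from contract_wedge_vecs_reduce[where w = w and k = k, OF k wk] obtain v where v: "\<forall>i<m - 1. pair (v i) z = 0"
    and "\<forall>\<eta>. wedge_vecs m w (tcons z \<eta>) = (pair (w k) z * (-1)^k) * wedge_vecs (m - 1) v \<eta>"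
    by blast
  then have "contract z (wedge_vecs m w) = (\<lambda>\<eta>. (pair (w k) z * (-1)^k) * wedge_vecs (m - 1) v \<eta>)"
    unfolding contract_def by simp
  then show ?thesis unfolding top_ext_def using v by blast
qed

lemma top_ext_cmult:
  assumes "f \<in> top_ext m W"
  shows "(\<lambda>\<eta>. a * f \<eta>) \<in> top_ext m W"
proof -
  obtain c w where "f = (\<lambda>xi. c * wedge_vecs m w xi)" and "\<forall>i<m. w i \<in> W"
    using assms unfolding top_ext_def by blast
  then have "(\<lambda>\<eta>. a * f \<eta>) = (\<lambda>xi. (a * c) * wedge_vecs m w xi) \<and> (\<forall>i<m. w i \<in> W)"
    by (simp add: mult.assoc)
  then show ?thesis unfolding top_ext_def by blast
qed

lemma contract_top_ext:
  fixes \<omega> :: "('n::finite, 'a::field) form"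
  assumes "\<omega> \<in> top_ext m UNIV" and "m \<ge> 1"
  shows "contract z \<omega> \<in> top_ext (m - 1) {v. pair v z = 0}"
proof -
  obtain c w where "\<omega> = (\<lambda>xi. c * wedge_vecs m w xi)"
    using assms(1) unfolding top_ext_def by blast
  then show ?thesis
    using top_ext_cmult[OF contract_wedge_vecs_in_top_ext[OF assms(2), of z w], of c]
    unfolding contract_def by simp
qed

text \<open>Contract the identity \<open>\<beta> \<and> \<omega> = 0\<close> in degree \<open>CARD('n) + 1\<close> with \<open>z\<close>.\<close>

lemma wedge_left_contract:
  fixes \<omega> :: "('n::finite, 'a::field) form"
  assumes "\<omega> \<in> top_ext CARD('n) UNIV"
  shows "wedge_left CARD('n) \<beta> (contract z \<omega>) xi = pair \<beta> z * \<omega> xi"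
proof -
  let ?r = "CARD('n)"
  obtain c w where \<omega>: "\<omega> = (\<lambda>xi. c * wedge_vecs ?r w xi)"
    using assms unfolding top_ext_def by blast
  let ?W = "wedge_vecs ?r w"
  have "0 = wedge_left (Suc ?r) \<beta> ?W (tcons z xi)"
    by (rule wedge_left_top_eq_0[symmetric])
  also have "\<dots> = pair \<beta> z * ?W xi + (\<Sum>i<?r. - ((-1)^i * pair \<beta> (xi i) * ?W (tcons z (skip i xi))))"
    unfolding wedge_left_def by (subst sum.lessThan_Suc_shift) simp
  also have "\<dots> = pair \<beta> z * ?W xi - wedge_left ?r \<beta> (contract z ?W) xi"
    unfolding wedge_left_def contract_def by (simp only: sum_negf) simp
  finally have "wedge_left ?r \<beta> (contract z ?W) xi = pair \<beta> z * ?W xi" by simp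
  moreover have "wedge_left ?r \<beta> (contract z \<omega>) xi = c * wedge_left ?r \<beta> (contract z ?W) xi"
    unfolding \<omega> wedge_left_def contract_def by (simp add: sum_distrib_left mult.left_commute)
  ultimately show ?thesis unfolding \<omega> by simp
qed

lemma wedge_left_tcons:
  assumes "\<omega>0 \<in> top_ext m {v. pair v z = 0}"
  shows "wedge_left (Suc m) \<beta> \<omega>0 (tcons z \<eta>) = pair \<beta> z * \<omega>0 \<eta>"
proof -
  obtain c v where \<omega>0: "\<omega>0 = (\<lambda>xi. c * wedge_vecs m v xi)" and v: "\<forall>i<m. pair (v i) z = 0"
    using assms unfolding top_ext_def by blast
  have "\<omega>0 (tcons z (skip i \<eta>)) = 0" if "i < m" for i
    using wedge_vecs_eq_0_if_annihilated[of m v] that v unfolding \<omega>0 by simp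
  then show ?thesis unfolding wedge_left_def by (subst sum.lessThan_Suc_shift) simp
qed

lemma dinv_eq:
  fixes \<omega> :: "('n::finite, 'a::field) form"
  assumes \<omega>: "\<omega> \<in> top_ext CARD('n) UNIV" and \<beta>: "pair \<beta> z \<noteq> 0"
  shows "dinv CARD('n) {v. pair v z = 0} \<beta> \<omega> = (\<lambda>\<eta>. contract z \<omega> \<eta> / pair \<beta> z)"
proof -
  obtain r' where r': "CARD('n) = Suc r'" using not0_implies_Suc[of "CARD('n)"] by auto
  let ?\<omega>0 = "\<lambda>\<eta>. contract z \<omega> \<eta> / pair \<beta> z"
  have top: "?\<omega>0 \<in> top_ext (CARD('n) - 1) {v. pair v z = 0}"
    using top_ext_cmult[OF contract_top_ext[OF \<omega>], of "1 / pair \<beta> z"] r' by simp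
  have wedge: "wedge_left CARD('n) \<beta> ?\<omega>0 = \<omega>"
  proof
    fix xi
    have "wedge_left CARD('n) \<beta> ?\<omega>0 xi = wedge_left CARD('n) \<beta> (contract z \<omega>) xi / pair \<beta> z"
      unfolding wedge_left_def by (simp add: sum_divide_distrib)
    then show "wedge_left CARD('n) \<beta> ?\<omega>0 xi = \<omega> xi" using wedge_left_contract[OF \<omega>] \<beta> by simp
  qed
  have unique: "\<omega>0 = ?\<omega>0"
    if "\<omega>0 \<in> top_ext (CARD('n) - 1) {v. pair v z = 0}" and "wedge_left CARD('n) \<beta> \<omega>0 = \<omega>" for \<omega>0
  proof
    fix \<eta>
    have "contract z \<omega> \<eta> = pair \<beta> z * \<omega>0 \<eta>"
      using wedge_left_tcons[of \<omega>0 r' z \<beta> \<eta>] that r' unfolding contract_def by simp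
    then show "\<omega>0 \<eta> = ?\<omega>0 \<eta>" using \<beta> by simp
  qed
  show ?thesis
    unfolding dinv_def by (rule the_equality) (use top wedge unique in blast)+
qed

section \<open>Polynomial and rational functions\<close>

lemma polyfun_mono: "f \<in> polyfun W \<Longrightarrow> W \<subseteq> W' \<Longrightarrow> f \<in> polyfun W'"
  by (induction f rule: polyfun.induct) (auto intro: polyfun.intros)

lemma polyfun_prod_power:
  assumes "finite D" "D \<subseteq> W"
  shows "(\<lambda>z. \<Prod>\<alpha>\<in>D. pair \<alpha> z ^ e \<alpha>) \<in> polyfun W"
  using assms
proof (induction D rule: finite_induct)
  case (insert \<alpha> D)
  have "(\<lambda>z. pair \<alpha> z ^ n) \<in> polyfun W" for n
    using insert.prems by (induction n) (auto intro: polyfun.intros)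
  then show ?case using insert polyfun.mult by fastforce
qed (simp add: polyfun.const)

lemma polyfun_translate_invariant:
  "f \<in> polyfun {v. pair v z0 = 0} \<Longrightarrow> f (\<lambda>i. z i + t * z0 i) = f z"
  by (induction f rule: polyfun.induct) (auto simp: pair_translate)

lemma polyfun_on_line:
  assumes "f \<in> polyfun W"
  shows "\<exists>p. \<forall>t. f (\<lambda>i. z i + t * z0 i) = poly p t"
  using assms
proof (induction f rule: polyfun.induct)
  case (const c) show ?case by (rule exI[of _ "[:c:]"]) simp
next
  case (lin v) show ?case
    by (rule exI[of _ "[:pair v z, pair v z0:]"]) (simp add: pair_translate algebra_simps)
next
  case (add f g) then show ?case by (metis poly_add)
next
  case (mult f g) then show ?case by (metis poly_mult)
qed

lemma off_imp_prod_power_neq_0: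
  fixes z :: "'n::finite \<Rightarrow> 'a::field"
  shows "off D z \<Longrightarrow> (\<Prod>\<alpha>\<in>D. pair \<alpha> z ^ e \<alpha>) \<noteq> 0"
  unfolding off_def by (induction D rule: infinite_finite_induct) auto

lemma ratfunI:
  "P \<in> polyfun W \<Longrightarrow> (\<And>z. off D z \<Longrightarrow> f z = P z / (\<Prod>\<alpha>\<in>D. pair \<alpha> z ^ e \<alpha>)) \<Longrightarrow> f \<in> ratfun W D"
  unfolding ratfun_def by blast

lemma ratfunE:
  assumes "f \<in> ratfun W D"
  obtains P e where "P \<in> polyfun W" and "\<forall>z. off D z \<longrightarrow> f z = P z / (\<Prod>\<alpha>\<in>D. pair \<alpha> z ^ e \<alpha>)"
  using assms unfolding ratfun_def by blast

lemma ratfun_cong: "f \<in> ratfun W D \<Longrightarrow> (\<And>z. off D z \<Longrightarrow> f z = g z) \<Longrightarrow> g \<in> ratfun W D"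
  unfolding ratfun_def by auto

lemma polyfun_subset_ratfun: "polyfun W \<subseteq> ratfun W D"
  by (auto intro: ratfunI[where e = "\<lambda>_. 0"])

lemma ratfun_const: "(\<lambda>z. c) \<in> ratfun W D"
  using polyfun_subset_ratfun polyfun.const by blast

lemma ratfun_mono:
  assumes "finite D'" "D \<subseteq> D'" "W \<subseteq> W'"
  shows "ratfun W D \<subseteq> ratfun W' D'"
proof
  fix f assume "f \<in> ratfun W D"
  then obtain P e where P: "P \<in> polyfun W" and f: "\<And>z. off D z \<Longrightarrow> f z = P z / (\<Prod>\<alpha>\<in>D. pair \<alpha> z ^ e \<alpha>)"
    using ratfunE by blast
  show "f \<in> ratfun W' D'"
  proof (rule ratfunI[OF polyfun_mono[OF P assms(3)]])
    fix z assume z: "off D' z"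
    have "(\<Prod>\<alpha>\<in>D'. pair \<alpha> z ^ (if \<alpha> \<in> D then e \<alpha> else 0)) = (\<Prod>\<alpha>\<in>D. pair \<alpha> z ^ e \<alpha>)"
      by (rule prod.mono_neutral_cong_right[OF assms(1,2)]) auto
    moreover have "off D z" using z assms(2) unfolding off_def by blast
    ultimately show "f z = P z / (\<Prod>\<alpha>\<in>D'. pair \<alpha> z ^ (if \<alpha> \<in> D then e \<alpha> else 0))"
      using f by simp
  qed
qed

lemma ratfun_add:
  assumes "finite D" "D \<subseteq> W" and f: "f \<in> ratfun W D" and g: "g \<in> ratfun W D"
  shows "(\<lambda>z. f z + g z) \<in> ratfun W D"
proof -
  obtain P e where P: "P \<in> polyfun W" and fe: "\<And>z. off D z \<Longrightarrow> f z = P z / (\<Prod>\<alpha>\<in>D. pair \<alpha> z ^ e \<alpha>)"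
    using ratfunE[OF f] by blast
  obtain Q e' where Q: "Q \<in> polyfun W" and ge: "\<And>z. off D z \<Longrightarrow> g z = Q z / (\<Prod>\<alpha>\<in>D. pair \<alpha> z ^ e' \<alpha>)"
    using ratfunE[OF g] by blast
  let ?A = "\<lambda>z. \<Prod>\<alpha>\<in>D. pair \<alpha> z ^ e \<alpha>" and ?B = "\<lambda>z. \<Prod>\<alpha>\<in>D. pair \<alpha> z ^ e' \<alpha>"
  have "(\<lambda>z. P z * ?B z + Q z * ?A z) \<in> polyfun W"
    using P Q polyfun_prod_power[OF assms(1,2)] by (intro polyfun.intros)
  then show ?thesis
  proof (rule ratfunI[where e = "\<lambda>\<alpha>. e \<alpha> + e' \<alpha>"])
    fix z assume z: "off D z"
    then show "f z + g z = (P z * ?B z + Q z * ?A z) / (\<Prod>\<alpha>\<in>D. pair \<alpha> z ^ (e \<alpha> + e' \<alpha>))"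
      using fe ge off_imp_prod_power_neq_0[OF z]
      by (simp add: power_add prod.distrib field_simps)
  qed
qed

lemma ratfun_mult:
  assumes f: "f \<in> ratfun W D" and g: "g \<in> ratfun W D"
  shows "(\<lambda>z. f z * g z) \<in> ratfun W D"
proof -
  obtain P e where P: "P \<in> polyfun W" and fe: "\<And>z. off D z \<Longrightarrow> f z = P z / (\<Prod>\<alpha>\<in>D. pair \<alpha> z ^ e \<alpha>)"
    using ratfunE[OF f] by blast
  obtain Q e' where Q: "Q \<in> polyfun W" and ge: "\<And>z. off D z \<Longrightarrow> g z = Q z / (\<Prod>\<alpha>\<in>D. pair \<alpha> z ^ e' \<alpha>)"
    using ratfunE[OF g] by blast
  show ?thesis
    by (rule ratfunI[OF polyfun.mult[OF P Q], where e = "\<lambda>\<alpha>. e \<alpha> + e' \<alpha>"])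
      (simp add: fe ge power_add prod.distrib)
qed

lemma ratfun_inverse_pair:
  assumes "finite D" and "\<beta> \<in> D"
  shows "(\<lambda>z. inverse (pair \<beta> z)) \<in> ratfun W D"
proof (rule ratfunI[OF polyfun.const, where e = "\<lambda>\<alpha>. if \<alpha> = \<beta> then 1 else 0"])
  fix z
  have "(\<Prod>\<alpha>\<in>D. pair \<alpha> z ^ (if \<alpha> = \<beta> then 1 else 0)) = (\<Prod>\<alpha>\<in>D. if \<alpha> = \<beta> then pair \<alpha> z else 1)"
    by (rule prod.cong) auto
  also have "\<dots> = pair \<beta> z" using assms by simp
  finally show "inverse (pair \<beta> z) = 1 / (\<Prod>\<alpha>\<in>D. pair \<alpha> z ^ (if \<alpha> = \<beta> then 1 else 0))"
    by (simp add: inverse_eq_divide)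
qed

lemma ratfun_inverse_prod_list:
  assumes "finite D" and "set \<nu> \<subseteq> D"
  shows "(\<lambda>z. inverse (\<Prod>\<alpha>\<leftarrow>\<nu>. pair \<alpha> z)) \<in> ratfun W D"
  using assms(2)
proof (induction \<nu>)
  case Nil
  show ?case using ratfun_const[of 1] by simp
next
  case (Cons \<alpha> \<nu>)
  then show ?case
    using ratfun_mult[OF ratfun_inverse_pair[OF assms(1), of \<alpha>]] by (simp add: inverse_mult_distrib)
qed

lemma prod_list_concat_replicate:
  "(\<Prod>x\<leftarrow>concat (map (\<lambda>x. replicate (e x) x) xs). f x) = (\<Prod>x\<leftarrow>xs. f x ^ e x)"
  by (induction xs) (auto simp: prod_list_replicate)

section \<open>The residue map\<close>

locale hyperplane =
  fixes \<Delta> :: "('n::finite \<Rightarrow> 'a::field_char_0) set" and z0 :: "'n \<Rightarrow> 'a" and V0 :: "('n \<Rightarrow> 'a) set"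
  assumes finite_\<Delta>: "finite \<Delta>" and V0_eq: "V0 = {v. pair v z0 = 0}"
begin

abbreviation "\<Delta>0 \<equiv> \<Delta> \<inter> V0"
abbreviation "R0 \<equiv> ratfun V0 \<Delta>0"
abbreviation "Dom \<equiv> tens (ratfun UNIV \<Delta>) (top_ext CARD('n) UNIV)"
abbreviation "Cod \<equiv> tens R0 (top_ext (CARD('n) - 1) V0)"

lemma R0_subset_ratfun: "R0 \<subseteq> ratfun UNIV \<Delta>"
  by (rule ratfun_mono[OF finite_\<Delta>]) auto

lemma R0_add: "f \<in> R0 \<Longrightarrow> g \<in> R0 \<Longrightarrow> (\<lambda>z. f z + g z) \<in> R0"
  by (rule ratfun_add) (use finite_\<Delta> in auto)

lemma tensorI: "f \<in> ratfun UNIV \<Delta> \<Longrightarrow> \<omega> \<in> top_ext CARD('n) UNIV \<Longrightarrow> (\<lambda>z xi. f z * \<omega> xi) \<in> Dom"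
  unfolding tens_def by blast

lemma off_\<Delta>0_translate: "off \<Delta>0 z \<Longrightarrow> off \<Delta>0 (\<lambda>i. z i + t * z0 i)"
  unfolding off_def V0_eq by (simp add: pair_translate)

lemma finite_line_meets_hyperplanes:
  assumes z: "off \<Delta>0 z"
  shows "finite {t. \<not> off \<Delta> (\<lambda>i. z i + t * z0 i)}"
proof (rule finite_subset)
  show "{t. \<not> off \<Delta> (\<lambda>i. z i + t * z0 i)} \<subseteq> (\<lambda>\<alpha>. - pair \<alpha> z / pair \<alpha> z0) ` \<Delta>"
  proof
    fix t assume "t \<in> {t. \<not> off \<Delta> (\<lambda>i. z i + t * z0 i)}"
    then obtain \<alpha> where \<alpha>: "\<alpha> \<in> \<Delta>" and t: "pair \<alpha> z + t * pair \<alpha> z0 = 0"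
      unfolding off_def by (auto simp: pair_translate)
    have "pair \<alpha> z0 \<noteq> 0"
    proof
      assume "pair \<alpha> z0 = 0"
      then have "\<alpha> \<in> \<Delta>0" using \<alpha> V0_eq by simp
      then show False using z t \<open>pair \<alpha> z0 = 0\<close> unfolding off_def by auto
    qed
    then have "t = - pair \<alpha> z / pair \<alpha> z0" using t by (simp add: field_simps add_eq_0_iff)
    then show "t \<in> (\<lambda>\<alpha>. - pair \<alpha> z / pair \<alpha> z0) ` \<Delta>" using \<alpha> by blast
  qed
qed (simp add: finite_\<Delta>)

lemma R0_translate_invariant:
  assumes "f \<in> R0" and z: "off \<Delta>0 z"
  shows "f (\<lambda>i. z i + t * z0 i) = f z"
proof -
  obtain P e where P: "P \<in> polyfun V0" and f: "\<And>z. off \<Delta>0 z \<Longrightarrow> f z = P z / (\<Prod>\<alpha>\<in>\<Delta>0. pair \<alpha> z ^ e \<alpha>)"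
    using ratfunE[OF assms(1)] by blast
  have "P (\<lambda>i. z i + t * z0 i) = P z"
    using P unfolding V0_eq by (rule polyfun_translate_invariant)
  moreover have "(\<Prod>\<alpha>\<in>\<Delta>0. pair \<alpha> (\<lambda>i. z i + t * z0 i) ^ e \<alpha>) = (\<Prod>\<alpha>\<in>\<Delta>0. pair \<alpha> z ^ e \<alpha>)"
    by (rule prod.cong) (auto simp: V0_eq pair_translate)
  ultimately show ?thesis using f z off_\<Delta>0_translate[OF z] by simp
qed

lemma is_rational_fun_on_line:
  assumes "f \<in> ratfun UNIV \<Delta>" and z: "off \<Delta>0 z"
  shows "is_rational_fun (\<lambda>t. f (\<lambda>i. z i + t * z0 i))"
proof -
  obtain P e where P: "P \<in> polyfun UNIV" and f: "\<And>z. off \<Delta> z \<Longrightarrow> f z = P z / (\<Prod>\<alpha>\<in>\<Delta>. pair \<alpha> z ^ e \<alpha>)"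
    using ratfunE[OF assms(1)] by blast
  obtain p where p: "\<And>t. P (\<lambda>i. z i + t * z0 i) = poly p t" using polyfun_on_line[OF P] by blast
  define q where "q = (\<Prod>\<alpha>\<in>\<Delta>. [:pair \<alpha> z, pair \<alpha> z0:] ^ e \<alpha>)"
  have "[:pair \<alpha> z, pair \<alpha> z0:] \<noteq> 0" if "\<alpha> \<in> \<Delta>" for \<alpha>
  proof (cases "pair \<alpha> z0 = 0")
    case True
    then have "\<alpha> \<in> \<Delta>0" using that V0_eq by simp
    then show ?thesis using z unfolding off_def by auto
  qed simp
  then have q: "q \<noteq> 0" unfolding q_def using finite_\<Delta> by (simp add: prod_zero_iff) blast
  have "poly q t = (\<Prod>\<alpha>\<in>\<Delta>. pair \<alpha> (\<lambda>i. z i + t * z0 i) ^ e \<alpha>)" for t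
    unfolding q_def by (simp add: poly_prod pair_translate algebra_simps)
  then have "finite {t. f (\<lambda>i. z i + t * z0 i) \<noteq> poly p t / poly q t}"
    by (intro finite_subset[OF _ finite_line_meets_hyperplanes[OF z]]) (auto simp: f p)
  then show ?thesis unfolding is_rational_fun_def using q by blast
qed

lemma Res_tensor:
  assumes "f \<in> ratfun UNIV \<Delta>" and "off \<Delta>0 z"
  shows "Res z0 (\<lambda>z xi. f z * \<omega> xi) z \<eta> = contract z0 \<omega> \<eta> * neg_res_inf (\<lambda>t. f (\<lambda>i. z i + t * z0 i))"
proof -
  have "Res z0 (\<lambda>z xi. f z * \<omega> xi) z \<eta> = neg_res_inf (\<lambda>t. contract z0 \<omega> \<eta> * f (\<lambda>i. z i + t * z0 i))"
    unfolding Res_def contract_def by (simp add: mult.commute)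
  also have "\<dots> = contract z0 \<omega> \<eta> * neg_res_inf (\<lambda>t. f (\<lambda>i. z i + t * z0 i))"
    by (rule neg_res_inf_cmult[OF is_rational_fun_on_line[OF assms]])
  finally show ?thesis .
qed

lemma Res_eq_off:
  assumes "eq_off \<Delta> \<Phi> \<Psi>"
  shows "eq_off \<Delta>0 (Res z0 \<Phi>) (Res z0 \<Psi>)"
  unfolding eq_off_def
proof (intro allI impI)
  fix z \<eta> assume z: "off \<Delta>0 z"
  have "{t. \<Phi> (\<lambda>i. z i + t * z0 i) (tcons z0 \<eta>) \<noteq> \<Psi> (\<lambda>i. z i + t * z0 i) (tcons z0 \<eta>)}
      \<subseteq> {t. \<not> off \<Delta> (\<lambda>i. z i + t * z0 i)}"
    using assms unfolding eq_off_def by auto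
  from finite_subset[OF this finite_line_meets_hyperplanes[OF z]]
  show "Res z0 \<Phi> z \<eta> = Res z0 \<Psi> z \<eta>" unfolding Res_def by (rule neg_res_inf_cong)
qed

lemma Res_add:
  assumes "\<Phi> \<in> Dom" "\<Psi> \<in> Dom"
  shows "eq_off \<Delta>0 (Res z0 (\<lambda>z xi. \<Phi> z xi + \<Psi> z xi)) (\<lambda>z \<eta>. Res z0 \<Phi> z \<eta> + Res z0 \<Psi> z \<eta>)"
proof -
  obtain f \<omega> g \<omega>' where \<Phi>: "\<Phi> = (\<lambda>z xi. f z * \<omega> xi)" and f: "f \<in> ratfun UNIV \<Delta>"
    and \<Psi>: "\<Psi> = (\<lambda>z xi. g z * \<omega>' xi)" and g: "g \<in> ratfun UNIV \<Delta>"
    using assms unfolding tens_def by blast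
  show ?thesis
    unfolding eq_off_def Res_def \<Phi> \<Psi>
    by (intro allI impI neg_res_inf_add is_rational_fun_cmult_right
        is_rational_fun_on_line[OF f] is_rational_fun_on_line[OF g])
qed

lemma Res_R0_mult:
  assumes \<psi>: "\<psi> \<in> R0" and "\<Phi> \<in> Dom"
  shows "eq_off \<Delta>0 (Res z0 (\<lambda>z xi. \<psi> z * \<Phi> z xi)) (\<lambda>z \<eta>. \<psi> z * Res z0 \<Phi> z \<eta>)"
proof -
  obtain f \<omega> where \<Phi>: "\<Phi> = (\<lambda>z xi. f z * \<omega> xi)" and f: "f \<in> ratfun UNIV \<Delta>"
    using assms(2) unfolding tens_def by blast
  show ?thesis
    unfolding eq_off_def
  proof (intro allI impI)
    fix z \<eta> assume z: "off \<Delta>0 z"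
    have "Res z0 (\<lambda>z xi. \<psi> z * \<Phi> z xi) z \<eta>
        = neg_res_inf (\<lambda>t. \<psi> z * (f (\<lambda>i. z i + t * z0 i) * \<omega> (tcons z0 \<eta>)))"
      unfolding Res_def \<Phi> using R0_translate_invariant[OF \<psi> z] by simp
    also have "\<dots> = \<psi> z * Res z0 \<Phi> z \<eta>"
      unfolding Res_def \<Phi>
      by (rule neg_res_inf_cmult[OF is_rational_fun_cmult_right[OF is_rational_fun_on_line[OF f z]]])
    finally show "Res z0 (\<lambda>z xi. \<psi> z * \<Phi> z xi) z \<eta> = \<psi> z * Res z0 \<Phi> z \<eta>" .
  qed
qed

lemma Res_inverse_pair:
  assumes \<omega>: "\<omega> \<in> top_ext CARD('n) UNIV" and \<beta>: "\<beta> \<in> \<Delta> - V0"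
  shows "eq_off \<Delta>0 (Res z0 (\<lambda>z xi. inverse (pair \<beta> z) * \<omega> xi)) (\<lambda>z \<eta>. dinv CARD('n) V0 \<beta> \<omega> \<eta>)"
  unfolding eq_off_def
proof (intro allI impI)
  fix z \<eta> assume z: "off \<Delta>0 z"
  have \<beta>z0: "pair \<beta> z0 \<noteq> 0" using \<beta> V0_eq by simp
  have "Res z0 (\<lambda>z xi. inverse (pair \<beta> z) * \<omega> xi) z \<eta>
      = contract z0 \<omega> \<eta> * neg_res_inf (\<lambda>t. inverse (pair \<beta> z + t * pair \<beta> z0))"
    using Res_tensor[OF ratfun_inverse_pair[OF finite_\<Delta>] z] \<beta> by (simp add: pair_translate)
  also have "\<dots> = contract z0 \<omega> \<eta> / pair \<beta> z0" using neg_res_inf_inverse_linear[OF \<beta>z0] by simp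
  also have "\<dots> = dinv CARD('n) V0 \<beta> \<omega> \<eta>" using dinv_eq[OF \<omega> \<beta>z0] V0_eq by simp
  finally show "Res z0 (\<lambda>z xi. inverse (pair \<beta> z) * \<omega> xi) z \<eta> = dinv CARD('n) V0 \<beta> \<omega> \<eta>" .
qed

lemma Res_polyfun:
  assumes P: "P \<in> polyfun UNIV"
  shows "eq_off \<Delta>0 (Res z0 (\<lambda>z xi. P z * \<omega> xi)) (\<lambda>z \<eta>. 0)"
  unfolding eq_off_def
proof (intro allI impI)
  fix z \<eta> assume z: "off \<Delta>0 z"
  obtain p where "\<And>t. P (\<lambda>i. z i + t * z0 i) = poly p t" using polyfun_on_line[OF P] by blast
  then have "Res z0 (\<lambda>z xi. P z * \<omega> xi) z \<eta> = contract z0 \<omega> \<eta> * neg_res_inf (\<lambda>t. poly p t)"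
    using Res_tensor[OF polyfun_subset_ratfun[THEN subsetD, OF P] z] by simp
  moreover have "neg_res_inf (\<lambda>t. poly p t) = 0" by (rule neg_res_inf_poly)
  ultimately show "Res z0 (\<lambda>z xi. P z * \<omega> xi) z \<eta> = 0" by simp
qed

lemma Res_inverse_prod_list:
  assumes \<nu>: "set \<nu> \<subseteq> \<Delta> - V0" and "length \<nu> > 1"
  shows "eq_off \<Delta>0 (Res z0 (\<lambda>z xi. inverse (\<Prod>\<alpha>\<leftarrow>\<nu>. pair \<alpha> z) * \<omega> xi)) (\<lambda>z \<eta>. 0)"
  unfolding eq_off_def
proof (intro allI impI)
  fix z \<eta> assume z: "off \<Delta>0 z"
  have "(\<lambda>z. inverse (\<Prod>\<alpha>\<leftarrow>\<nu>. pair \<alpha> z)) \<in> ratfun UNIV \<Delta>"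
    using \<nu> by (intro ratfun_inverse_prod_list[OF finite_\<Delta>]) auto
  then have "Res z0 (\<lambda>z xi. inverse (\<Prod>\<alpha>\<leftarrow>\<nu>. pair \<alpha> z) * \<omega> xi) z \<eta>
      = contract z0 \<omega> \<eta> * neg_res_inf (\<lambda>t. inverse (\<Prod>\<alpha>\<leftarrow>\<nu>. pair \<alpha> z + t * pair \<alpha> z0))"
    using Res_tensor[OF _ z] by (simp add: pair_translate)
  moreover have "\<forall>\<alpha>\<in>set \<nu>. pair \<alpha> z0 \<noteq> 0" using \<nu> V0_eq by auto
  then have "neg_res_inf (\<lambda>t. inverse (\<Prod>\<alpha>\<leftarrow>\<nu>. pair \<alpha> z + t * pair \<alpha> z0)) = 0"
    using assms(2) by (rule neg_res_inf_inverse_prod_linear)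
  ultimately show "Res z0 (\<lambda>z xi. inverse (\<Prod>\<alpha>\<leftarrow>\<nu>. pair \<alpha> z) * \<omega> xi) z \<eta> = 0" by simp
qed

lemma res_props_Res: "res_props CARD('n) \<Delta> V0 (Res z0)"
  unfolding res_props_def using Res_inverse_pair Res_polyfun Res_inverse_prod_list by blast

section \<open>Partial fractions along \<open>V0\<close>\<close>

text \<open>The \<open>R_\<Delta>0\<close>-span of \<open>S(V)\<close> and of the \<open>m_\<nu>\<close>, \<open>\<nu> \<subseteq> \<Delta>1\<close> nonempty, up to equality off the
  hyperplanes of \<open>\<Delta>\<close>; by \<open>ratfun_subset_partial_fractions\<close> it is all of \<open>R_\<Delta>\<close>.\<close>

inductive_set partial_fractions :: "(('n \<Rightarrow> 'a) \<Rightarrow> 'a) set" where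
  R0_poly: "P \<in> polyfun UNIV \<Longrightarrow> c \<in> R0 \<Longrightarrow> (\<lambda>z. c z * P z) \<in> partial_fractions"
| R0_inverse_prod: "set \<nu> \<subseteq> \<Delta> - V0 \<Longrightarrow> \<nu> \<noteq> [] \<Longrightarrow> c \<in> R0
    \<Longrightarrow> (\<lambda>z. c z * inverse (\<Prod>\<alpha>\<leftarrow>\<nu>. pair \<alpha> z)) \<in> partial_fractions"
| add: "f \<in> partial_fractions \<Longrightarrow> g \<in> partial_fractions \<Longrightarrow> (\<lambda>z. f z + g z) \<in> partial_fractions"
| off_cong: "f \<in> partial_fractions \<Longrightarrow> \<forall>z. off \<Delta> z \<longrightarrow> f z = g z \<Longrightarrow> g \<in> partial_fractions"

lemma partial_fractions_subset_ratfun: "partial_fractions \<subseteq> ratfun UNIV \<Delta>"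
proof
  fix f assume "f \<in> partial_fractions"
  then show "f \<in> ratfun UNIV \<Delta>"
  proof (induction f rule: partial_fractions.induct)
    case (R0_poly P c)
    then show ?case using ratfun_mult R0_subset_ratfun polyfun_subset_ratfun by blast
  next
    case (R0_inverse_prod \<nu> c)
    then have "(\<lambda>z. inverse (\<Prod>\<alpha>\<leftarrow>\<nu>. pair \<alpha> z)) \<in> ratfun UNIV \<Delta>"
      by (intro ratfun_inverse_prod_list[OF finite_\<Delta>]) auto
    then show ?case using ratfun_mult R0_subset_ratfun R0_inverse_prod(3) by blast
  next
    case (add f g)
    then show ?case using ratfun_add[OF finite_\<Delta> subset_UNIV] by blast
  next
    case (off_cong f g)
    then show ?case using ratfun_cong by metis
  qed
qed

lemma R0_mult_partial_fractions:
  assumes c: "c \<in> R0"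
  shows "f \<in> partial_fractions \<Longrightarrow> (\<lambda>z. c z * f z) \<in> partial_fractions"
proof (induction f rule: partial_fractions.induct)
  case (R0_poly P c')
  have "(\<lambda>z. (c z * c' z) * P z) \<in> partial_fractions"
    by (rule partial_fractions.R0_poly[OF R0_poly(1) ratfun_mult[OF c R0_poly(2)]])
  then show ?case by (rule partial_fractions.off_cong) (simp add: mult.assoc)
next
  case (R0_inverse_prod \<nu> c')
  have "(\<lambda>z. (c z * c' z) * inverse (\<Prod>\<alpha>\<leftarrow>\<nu>. pair \<alpha> z)) \<in> partial_fractions"
    by (rule partial_fractions.R0_inverse_prod[OF R0_inverse_prod(1,2) ratfun_mult[OF c R0_inverse_prod(3)]])
  then show ?case by (rule partial_fractions.off_cong) (simp add: mult.assoc)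
next
  case (add f g)
  have "(\<lambda>z. c z * f z + c z * g z) \<in> partial_fractions" by (rule partial_fractions.add[OF add.IH])
  then show ?case by (rule partial_fractions.off_cong) (simp add: distrib_left)
next
  case (off_cong f g)
  show ?case by (rule partial_fractions.off_cong[OF off_cong.IH]) (use off_cong.hyps(2) in auto)
qed

lemma const_inverse_prod_in_partial_fractions:
  assumes "set \<nu> \<subseteq> \<Delta> - V0"
  shows "(\<lambda>z. a * inverse (\<Prod>\<alpha>\<leftarrow>\<nu>. pair \<alpha> z)) \<in> partial_fractions"
proof (cases "\<nu> = []")
  case True
  have "(\<lambda>z. a * 1) \<in> partial_fractions"
    using partial_fractions.R0_poly[OF polyfun.const ratfun_const] .
  then show ?thesis using True by simp
next
  case False
  show ?thesis using partial_fractions.R0_inverse_prod[OF assms False ratfun_const] .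
qed

text \<open>With \<open>\<beta>\<close> the first entry of \<open>\<nu> = \<beta> # \<nu>'\<close>, write \<open>v = v' + a \<beta>\<close> with \<open>v' \<in> V0\<close>; then
  \<open>v m_\<nu> = a m_\<nu>' + v' m_\<nu>\<close>, and \<open>v'\<close> is a coefficient in \<open>R_\<Delta>0\<close>.\<close>

lemma pair_mult_inverse_prod_in_partial_fractions:
  assumes \<nu>: "set \<nu> \<subseteq> \<Delta> - V0"
  shows "(\<lambda>z. pair v z * inverse (\<Prod>\<alpha>\<leftarrow>\<nu>. pair \<alpha> z)) \<in> partial_fractions"
proof (cases \<nu>)
  case Nil
  have "(\<lambda>z. 1 * pair v z) \<in> partial_fractions"
    by (rule partial_fractions.R0_poly[OF polyfun.lin ratfun_const]) simp
  then show ?thesis by (rule partial_fractions.off_cong) (simp add: Nil)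
next
  case (Cons \<beta> \<nu>')
  have \<beta>: "\<beta> \<in> \<Delta> - V0" and \<nu>': "set \<nu>' \<subseteq> \<Delta> - V0" using \<nu> Cons by auto
  then have \<beta>z0: "pair \<beta> z0 \<noteq> 0" using V0_eq by simp
  define a where "a = pair v z0 / pair \<beta> z0"
  define v' where "v' = (\<lambda>i. v i - a * \<beta> i)"
  have pair_v': "pair v' z = pair v z - a * pair \<beta> z" for z unfolding v'_def by (rule pair_diff)
  have "v' \<in> V0" using pair_v'[of z0] \<beta>z0 V0_eq by (simp add: a_def)
  then have "(\<lambda>z. pair v' z * inverse (\<Prod>\<alpha>\<leftarrow>\<nu>. pair \<alpha> z)) \<in> partial_fractions"
    using partial_fractions.R0_inverse_prod[OF \<nu> _ polyfun_subset_ratfun[THEN subsetD, OF polyfun.lin]] Cons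
    by simp
  with const_inverse_prod_in_partial_fractions[OF \<nu>']
  have "(\<lambda>z. a * inverse (\<Prod>\<alpha>\<leftarrow>\<nu>'. pair \<alpha> z) + pair v' z * inverse (\<Prod>\<alpha>\<leftarrow>\<nu>. pair \<alpha> z))
      \<in> partial_fractions"
    by (rule partial_fractions.add)
  then show ?thesis
  proof (rule partial_fractions.off_cong, intro allI impI)
    fix z assume "off \<Delta> z"
    then have "pair \<beta> z \<noteq> 0" using \<beta> unfolding off_def by blast
    then have key: "pair v z * inverse (pair \<beta> z) = a + pair v' z * inverse (pair \<beta> z)"
      by (simp add: pair_v' field_simps)
    let ?m = "inverse (\<Prod>\<alpha>\<leftarrow>\<nu>'. pair \<alpha> z)"
    have "pair v z * inverse (\<Prod>\<alpha>\<leftarrow>\<nu>. pair \<alpha> z) = (pair v z * inverse (pair \<beta> z)) * ?m"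
      using Cons by (simp add: inverse_mult_distrib mult.assoc)
    also have "\<dots> = a * ?m + pair v' z * inverse (\<Prod>\<alpha>\<leftarrow>\<nu>. pair \<alpha> z)"
      using Cons by (simp only: key) (simp add: inverse_mult_distrib distrib_right mult.assoc)
    finally show "a * ?m + pair v' z * inverse (\<Prod>\<alpha>\<leftarrow>\<nu>. pair \<alpha> z) = pair v z * inverse (\<Prod>\<alpha>\<leftarrow>\<nu>. pair \<alpha> z)"
      by simp
  qed
qed

lemma polyfun_mult_partial_fractions:
  assumes P: "P \<in> polyfun UNIV"
    and P_inverse_prod: "\<And>\<nu>. set \<nu> \<subseteq> \<Delta> - V0 \<Longrightarrow> (\<lambda>z. P z * inverse (\<Prod>\<alpha>\<leftarrow>\<nu>. pair \<alpha> z)) \<in> partial_fractions"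
  shows "h \<in> partial_fractions \<Longrightarrow> (\<lambda>z. P z * h z) \<in> partial_fractions"
proof (induction h rule: partial_fractions.induct)
  case (R0_poly Q c)
  have "(\<lambda>z. c z * (P z * Q z)) \<in> partial_fractions"
    by (rule partial_fractions.R0_poly[OF polyfun.mult[OF P R0_poly(1)] R0_poly(2)])
  then show ?case by (rule partial_fractions.off_cong) (simp add: ac_simps)
next
  case (R0_inverse_prod \<nu> c)
  have "(\<lambda>z. c z * (P z * inverse (\<Prod>\<alpha>\<leftarrow>\<nu>. pair \<alpha> z))) \<in> partial_fractions"
    by (rule R0_mult_partial_fractions[OF R0_inverse_prod(3) P_inverse_prod[OF R0_inverse_prod(1)]])
  then show ?case by (rule partial_fractions.off_cong) (simp add: ac_simps)
next
  case (add h1 h2)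
  have "(\<lambda>z. P z * h1 z + P z * h2 z) \<in> partial_fractions" by (rule partial_fractions.add[OF add.IH])
  then show ?case by (rule partial_fractions.off_cong) (simp add: distrib_left)
next
  case (off_cong h1 h2)
  show ?case by (rule partial_fractions.off_cong[OF off_cong.IH]) (use off_cong.hyps(2) in auto)
qed

lemma polyfun_mult_inverse_prod_in_partial_fractions:
  assumes "P \<in> polyfun UNIV" and "set \<nu> \<subseteq> \<Delta> - V0"
  shows "(\<lambda>z. P z * inverse (\<Prod>\<alpha>\<leftarrow>\<nu>. pair \<alpha> z)) \<in> partial_fractions"
  using assms
proof (induction P arbitrary: \<nu> rule: polyfun.induct)
  case (const c)
  show ?case using const_inverse_prod_in_partial_fractions[OF const.prems] .
next
  case (lin v)
  show ?case using pair_mult_inverse_prod_in_partial_fractions[OF lin.prems] .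
next
  case (add f g)
  then have "(\<lambda>z. f z * inverse (\<Prod>\<alpha>\<leftarrow>\<nu>. pair \<alpha> z) + g z * inverse (\<Prod>\<alpha>\<leftarrow>\<nu>. pair \<alpha> z))
      \<in> partial_fractions"
    by (intro partial_fractions.add) auto
  then show ?case by (rule partial_fractions.off_cong) (simp add: distrib_right)
next
  case (mult f g)
  have "(\<lambda>z. f z * (g z * inverse (\<Prod>\<alpha>\<leftarrow>\<nu>. pair \<alpha> z))) \<in> partial_fractions"
    by (rule polyfun_mult_partial_fractions[OF mult.hyps(1) mult.IH(1) mult.IH(2)[OF mult.prems]])
  then show ?case by (rule partial_fractions.off_cong) (simp add: ac_simps)
qed

lemma ratfun_subset_partial_fractions: "ratfun UNIV \<Delta> \<subseteq> partial_fractions"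
proof
  fix f assume "f \<in> ratfun UNIV \<Delta>"
  then obtain P e where P: "P \<in> polyfun UNIV"
    and f: "\<And>z. off \<Delta> z \<Longrightarrow> f z = P z / (\<Prod>\<alpha>\<in>\<Delta>. pair \<alpha> z ^ e \<alpha>)"
    using ratfunE by blast
  obtain L where L: "set L = \<Delta> - V0" "distinct L"
    using finite_distinct_list[OF finite_Diff[OF finite_\<Delta>]] by blast
  define \<nu> where "\<nu> = concat (map (\<lambda>\<alpha>. replicate (e \<alpha>) \<alpha>) L)"
  have "set \<nu> \<subseteq> set L" unfolding \<nu>_def by (induction L) auto
  then have \<nu>: "set \<nu> \<subseteq> \<Delta> - V0" unfolding L(1) .
  have prod_\<nu>: "(\<Prod>\<alpha>\<leftarrow>\<nu>. pair \<alpha> z) = (\<Prod>\<alpha>\<in>\<Delta> - V0. pair \<alpha> z ^ e \<alpha>)" for z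
    unfolding \<nu>_def prod_list_concat_replicate L(1)[symmetric]
    by (rule prod.distinct_set_conv_list[OF L(2), symmetric])
  define c where "c = (\<lambda>z. inverse (\<Prod>\<alpha>\<in>\<Delta>0. pair \<alpha> z ^ e \<alpha>))"
  have "c \<in> R0"
    by (rule ratfunI[OF polyfun.const[of 1], where e = e]) (simp add: c_def inverse_eq_divide)
  from R0_mult_partial_fractions[OF this polyfun_mult_inverse_prod_in_partial_fractions[OF P \<nu>]]
  show "f \<in> partial_fractions"
  proof (rule partial_fractions.off_cong, intro allI impI)
    fix z assume z: "off \<Delta> z"
    have "(\<Prod>\<alpha>\<in>\<Delta>. pair \<alpha> z ^ e \<alpha>) = (\<Prod>\<alpha>\<in>\<Delta>0. pair \<alpha> z ^ e \<alpha>) * (\<Prod>\<alpha>\<in>\<Delta> - V0. pair \<alpha> z ^ e \<alpha>)"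
      by (rule prod.Int_Diff[OF finite_\<Delta>])
    then have "f z = P z * (c z * inverse (\<Prod>\<alpha>\<leftarrow>\<nu>. pair \<alpha> z))"
      unfolding f[OF z] c_def prod_\<nu> by (simp only: divide_inverse inverse_mult_distrib)
    then show "c z * (P z * inverse (\<Prod>\<alpha>\<leftarrow>\<nu>. pair \<alpha> z)) = f z"
      by (simp only: mult.left_commute)
  qed
qed

section \<open>Uniqueness\<close>

text \<open>The conditions of the theorem on \<open>res\<close>, except that its values are not required to lie in
  \<open>Cod\<close>; that they do follows from \<open>admissible_determined\<close>.\<close>

definition admissible :: "(('n, 'a) tensor \<Rightarrow> ('n, 'a) tensor) \<Rightarrow> bool" where
  "admissible res \<longleftrightarrow>
     (\<forall>\<Phi>\<in>Dom. \<forall>\<Psi>\<in>Dom. eq_off \<Delta> \<Phi> \<Psi> \<longrightarrow> eq_off \<Delta>0 (res \<Phi>) (res \<Psi>)) \<and>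
     (\<forall>\<Phi>\<in>Dom. \<forall>\<Psi>\<in>Dom. eq_off \<Delta>0 (res (\<lambda>z xi. \<Phi> z xi + \<Psi> z xi)) (\<lambda>z \<eta>. res \<Phi> z \<eta> + res \<Psi> z \<eta>)) \<and>
     (\<forall>\<psi>\<in>R0. \<forall>\<Phi>\<in>Dom. eq_off \<Delta>0 (res (\<lambda>z xi. \<psi> z * \<Phi> z xi)) (\<lambda>z \<eta>. \<psi> z * res \<Phi> z \<eta>)) \<and>
     res_props CARD('n) \<Delta> V0 res"

lemma R0_linear_res_props_iff:
  "R0_linear R0 Dom \<Delta> Cod \<Delta>0 res \<and> res_props CARD('n) \<Delta> V0 res \<longleftrightarrow>
     (\<forall>\<Phi>\<in>Dom. \<exists>\<Psi>\<in>Cod. eq_off \<Delta>0 (res \<Phi>) \<Psi>) \<and> admissible res"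
  unfolding R0_linear_def admissible_def by argo

lemma admissible_Res: "admissible (Res z0)"
  unfolding admissible_def using Res_eq_off Res_add Res_R0_mult res_props_Res by blast

lemma admissibleD:
  assumes "admissible res"
  shows admissible_eq_off: "\<Phi> \<in> Dom \<Longrightarrow> \<Psi> \<in> Dom \<Longrightarrow> eq_off \<Delta> \<Phi> \<Psi> \<Longrightarrow> eq_off \<Delta>0 (res \<Phi>) (res \<Psi>)"
    and admissible_add: "\<Phi> \<in> Dom \<Longrightarrow> \<Psi> \<in> Dom \<Longrightarrow>
      eq_off \<Delta>0 (res (\<lambda>z xi. \<Phi> z xi + \<Psi> z xi)) (\<lambda>z \<eta>. res \<Phi> z \<eta> + res \<Psi> z \<eta>)"
    and admissible_R0_mult: "\<psi> \<in> R0 \<Longrightarrow> \<Phi> \<in> Dom \<Longrightarrow>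
      eq_off \<Delta>0 (res (\<lambda>z xi. \<psi> z * \<Phi> z xi)) (\<lambda>z \<eta>. \<psi> z * res \<Phi> z \<eta>)"
    and admissible_res_props: "res_props CARD('n) \<Delta> V0 res"
  using assms unfolding admissible_def by blast+

lemma admissible_R0_mult_tensor:
  assumes "admissible res" and "c \<in> R0" and "f \<in> ratfun UNIV \<Delta>" and "\<omega> \<in> top_ext CARD('n) UNIV"
  shows "eq_off \<Delta>0 (res (\<lambda>z xi. c z * f z * \<omega> xi)) (\<lambda>z \<eta>. c z * res (\<lambda>z xi. f z * \<omega> xi) z \<eta>)"
  using admissible_R0_mult[OF assms(1,2) tensorI[OF assms(3,4)]] by (simp add: mult.assoc)

lemma admissible_inverse_prod_tensor:
  assumes res: "admissible res" and \<omega>: "\<omega> \<in> top_ext CARD('n) UNIV"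
    and \<nu>: "set \<nu> \<subseteq> \<Delta> - V0" "\<nu> \<noteq> []"
  shows "eq_off \<Delta>0 (res (\<lambda>z xi. inverse (\<Prod>\<alpha>\<leftarrow>\<nu>. pair \<alpha> z) * \<omega> xi))
    (\<lambda>z \<eta>. (if length \<nu> = 1 then inverse (pair (hd \<nu>) z0) else 0) * contract z0 \<omega> \<eta>)"
proof (cases "length \<nu> = 1")
  case True
  then obtain \<beta> where \<nu>_eq: "\<nu> = [\<beta>]" by (cases \<nu>) auto
  with \<nu>(1) have \<beta>: "\<beta> \<in> \<Delta> - V0" by simp
  then have "pair \<beta> z0 \<noteq> 0" using V0_eq by simp
  then have "dinv CARD('n) V0 \<beta> \<omega> = (\<lambda>\<eta>. inverse (pair \<beta> z0) * contract z0 \<omega> \<eta>)"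
    using dinv_eq[OF \<omega>] V0_eq by (simp add: divide_inverse mult.commute)
  moreover have "eq_off \<Delta>0 (res (\<lambda>z xi. inverse (pair \<beta> z) * \<omega> xi)) (\<lambda>z \<eta>. dinv CARD('n) V0 \<beta> \<omega> \<eta>)"
    using admissible_res_props[OF res] \<beta> \<omega> unfolding res_props_def by blast
  ultimately show ?thesis using \<nu>_eq by simp
next
  case False
  with \<nu>(2) have "length \<nu> > 1" by (cases \<nu>) auto
  then have "eq_off \<Delta>0 (res (\<lambda>z xi. inverse (\<Prod>\<alpha>\<leftarrow>\<nu>. pair \<alpha> z) * \<omega> xi)) (\<lambda>z \<eta>. 0)"
    using admissible_res_props[OF res] \<nu>(1) \<omega> unfolding res_props_def by blast
  then show ?thesis using False by simp
qed

definition res_determined :: "(('n \<Rightarrow> 'a) \<Rightarrow> 'a) \<Rightarrow> ('n, 'a) form \<Rightarrow> bool" where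
  "res_determined f \<omega> \<longleftrightarrow> (\<exists>\<psi>\<in>R0. \<forall>res. admissible res \<longrightarrow>
     eq_off \<Delta>0 (res (\<lambda>z xi. f z * \<omega> xi)) (\<lambda>z \<eta>. \<psi> z * contract z0 \<omega> \<eta>))"

lemma res_determinedI:
  assumes "\<psi> \<in> R0"
    and "\<And>res. admissible res \<Longrightarrow> eq_off \<Delta>0 (res (\<lambda>z xi. f z * \<omega> xi)) (\<lambda>z \<eta>. \<psi> z * contract z0 \<omega> \<eta>)"
  shows "res_determined f \<omega>"
  using assms unfolding res_determined_def by blast

lemma res_determined_R0_poly:
  assumes \<omega>: "\<omega> \<in> top_ext CARD('n) UNIV" and P: "P \<in> polyfun UNIV" and c: "c \<in> R0"
  shows "res_determined (\<lambda>z. c z * P z) \<omega>"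
proof (rule res_determinedI[OF ratfun_const[of 0]])
  fix res assume res: "admissible res"
  have "eq_off \<Delta>0 (res (\<lambda>z xi. P z * \<omega> xi)) (\<lambda>z \<eta>. 0)"
    using admissible_res_props[OF res] P \<omega> unfolding res_props_def by blast
  then show "eq_off \<Delta>0 (res (\<lambda>z xi. c z * P z * \<omega> xi)) (\<lambda>z \<eta>. 0 * contract z0 \<omega> \<eta>)"
    using admissible_R0_mult_tensor[OF res c polyfun_subset_ratfun[THEN subsetD, OF P] \<omega>]
    unfolding eq_off_def by simp
qed

lemma res_determined_R0_inverse_prod:
  assumes \<omega>: "\<omega> \<in> top_ext CARD('n) UNIV" and \<nu>: "set \<nu> \<subseteq> \<Delta> - V0" "\<nu> \<noteq> []" and c: "c \<in> R0"
  shows "res_determined (\<lambda>z. c z * inverse (\<Prod>\<alpha>\<leftarrow>\<nu>. pair \<alpha> z)) \<omega>"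
proof (rule res_determinedI[OF ratfun_mult[OF c ratfun_const]])
  fix res assume res: "admissible res"
  have "(\<lambda>z. inverse (\<Prod>\<alpha>\<leftarrow>\<nu>. pair \<alpha> z)) \<in> ratfun UNIV \<Delta>"
    using \<nu>(1) by (intro ratfun_inverse_prod_list[OF finite_\<Delta>]) auto
  from admissible_R0_mult_tensor[OF res c this \<omega>] admissible_inverse_prod_tensor[OF res \<omega> \<nu>]
  show "eq_off \<Delta>0 (res (\<lambda>z xi. c z * inverse (\<Prod>\<alpha>\<leftarrow>\<nu>. pair \<alpha> z) * \<omega> xi))
      (\<lambda>z \<eta>. c z * (if length \<nu> = 1 then inverse (pair (hd \<nu>) z0) else 0) * contract z0 \<omega> \<eta>)"
    unfolding eq_off_def by (simp add: mult.assoc)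
qed

lemma res_determined_add:
  assumes \<omega>: "\<omega> \<in> top_ext CARD('n) UNIV" and f: "f \<in> ratfun UNIV \<Delta>" and g: "g \<in> ratfun UNIV \<Delta>"
    and "res_determined f \<omega>" and "res_determined g \<omega>"
  shows "res_determined (\<lambda>z. f z + g z) \<omega>"
proof -
  obtain \<psi>f \<psi>g where "\<psi>f \<in> R0" "\<psi>g \<in> R0"
    and \<psi>f: "\<forall>res. admissible res \<longrightarrow> eq_off \<Delta>0 (res (\<lambda>z xi. f z * \<omega> xi)) (\<lambda>z \<eta>. \<psi>f z * contract z0 \<omega> \<eta>)"
    and \<psi>g: "\<forall>res. admissible res \<longrightarrow> eq_off \<Delta>0 (res (\<lambda>z xi. g z * \<omega> xi)) (\<lambda>z \<eta>. \<psi>g z * contract z0 \<omega> \<eta>)"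
    using assms(4,5) unfolding res_determined_def by blast
  show ?thesis
  proof (rule res_determinedI[OF R0_add[OF \<open>\<psi>f \<in> R0\<close> \<open>\<psi>g \<in> R0\<close>]])
    fix res assume res: "admissible res"
    have "eq_off \<Delta>0 (res (\<lambda>z xi. f z * \<omega> xi + g z * \<omega> xi))
        (\<lambda>z \<eta>. res (\<lambda>z xi. f z * \<omega> xi) z \<eta> + res (\<lambda>z xi. g z * \<omega> xi) z \<eta>)"
      by (rule admissible_add[OF res tensorI[OF f \<omega>] tensorI[OF g \<omega>]])
    then show "eq_off \<Delta>0 (res (\<lambda>z xi. (f z + g z) * \<omega> xi)) (\<lambda>z \<eta>. (\<psi>f z + \<psi>g z) * contract z0 \<omega> \<eta>)"
      using \<psi>f \<psi>g res unfolding eq_off_def by (simp add: distrib_right)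
  qed
qed

lemma res_determined_off_cong:
  assumes \<omega>: "\<omega> \<in> top_ext CARD('n) UNIV" and f: "f \<in> ratfun UNIV \<Delta>"
    and fg: "\<forall>z. off \<Delta> z \<longrightarrow> f z = g z" and "res_determined f \<omega>"
  shows "res_determined g \<omega>"
proof -
  obtain \<psi> where "\<psi> \<in> R0"
    and \<psi>: "\<forall>res. admissible res \<longrightarrow> eq_off \<Delta>0 (res (\<lambda>z xi. f z * \<omega> xi)) (\<lambda>z \<eta>. \<psi> z * contract z0 \<omega> \<eta>)"
    using assms(4) unfolding res_determined_def by blast
  have g: "g \<in> ratfun UNIV \<Delta>" using ratfun_cong[OF f] fg by blast
  show ?thesis
  proof (rule res_determinedI[OF \<open>\<psi> \<in> R0\<close>])
    fix res assume res: "admissible res"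
    have "eq_off \<Delta>0 (res (\<lambda>z xi. g z * \<omega> xi)) (res (\<lambda>z xi. f z * \<omega> xi))"
      using fg by (intro admissible_eq_off[OF res tensorI[OF g \<omega>] tensorI[OF f \<omega>]]) (simp add: eq_off_def)
    then show "eq_off \<Delta>0 (res (\<lambda>z xi. g z * \<omega> xi)) (\<lambda>z \<eta>. \<psi> z * contract z0 \<omega> \<eta>)"
      using \<psi> res unfolding eq_off_def by simp
  qed
qed

lemma partial_fractions_res_determined:
  assumes \<omega>: "\<omega> \<in> top_ext CARD('n) UNIV"
  shows "f \<in> partial_fractions \<Longrightarrow> res_determined f \<omega>"
proof (induction f rule: partial_fractions.induct)
  case (R0_poly P c)
  then show ?case by (rule res_determined_R0_poly[OF \<omega>])
next
  case (R0_inverse_prod \<nu> c)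
  then show ?case by (rule res_determined_R0_inverse_prod[OF \<omega>])
next
  case (add f g)
  show ?case
    by (rule res_determined_add[OF \<omega> _ _ add.IH])
      (use add.hyps partial_fractions_subset_ratfun in auto)
next
  case (off_cong f g)
  show ?case
    by (rule res_determined_off_cong[OF \<omega> _ off_cong.hyps(2) off_cong.IH])
      (use off_cong.hyps(1) partial_fractions_subset_ratfun in auto)
qed

lemma admissible_determined:
  assumes "\<Phi> \<in> Dom"
  shows "\<exists>\<Psi>\<in>Cod. \<forall>res. admissible res \<longrightarrow> eq_off \<Delta>0 (res \<Phi>) \<Psi>"
proof -
  obtain f \<omega> where \<Phi>: "\<Phi> = (\<lambda>z xi. f z * \<omega> xi)" and f: "f \<in> ratfun UNIV \<Delta>"
    and \<omega>: "\<omega> \<in> top_ext CARD('n) UNIV"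
    using assms unfolding tens_def by blast
  have "res_determined f \<omega>"
    using partial_fractions_res_determined[OF \<omega>] ratfun_subset_partial_fractions f by blast
  then obtain \<psi> where "\<psi> \<in> R0"
    and "\<forall>res. admissible res \<longrightarrow> eq_off \<Delta>0 (res \<Phi>) (\<lambda>z \<eta>. \<psi> z * contract z0 \<omega> \<eta>)"
    unfolding res_determined_def \<Phi> by blast
  moreover have "contract z0 \<omega> \<in> top_ext (CARD('n) - 1) V0"
    using contract_top_ext[OF \<omega>] V0_eq by (simp add: Suc_le_eq)
  ultimately show ?thesis unfolding tens_def by blast
qed

lemma Res_values_in_Cod: "\<forall>\<Phi>\<in>Dom. \<exists>\<Psi>\<in>Cod. eq_off \<Delta>0 (Res z0 \<Phi>) \<Psi>"
  using admissible_determined admissible_Res by blast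

lemma admissible_eq_off_Res:
  assumes res: "admissible res" and \<Phi>: "\<Phi> \<in> Dom"
  shows "eq_off \<Delta>0 (res \<Phi>) (Res z0 \<Phi>)"
proof -
  obtain \<Psi> where "\<forall>res. admissible res \<longrightarrow> eq_off \<Delta>0 (res \<Phi>) \<Psi>"
    using admissible_determined[OF \<Phi>] by blast
  then have "eq_off \<Delta>0 (res \<Phi>) \<Psi>" and "eq_off \<Delta>0 (Res z0 \<Phi>) \<Psi>"
    using res admissible_Res by blast+
  then show ?thesis unfolding eq_off_def by simp
qed

end

theorem mainTheorem6:
  fixes \<Delta> :: "('n::finite \<Rightarrow> 'a::field_char_0) set" and z0 :: "'n \<Rightarrow> 'a"
    and V0 :: "('n \<Rightarrow> 'a) set"
  assumes "finite \<Delta>" and "(\<lambda>i. 0) \<notin> \<Delta>"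
    and "\<forall>v. \<exists>c. v = (\<lambda>i. \<Sum>\<alpha>\<in>\<Delta>. c \<alpha> * \<alpha> i)"
    and "z0 \<noteq> (\<lambda>i. 0)" and "V0 = {v. pair v z0 = 0}"
  shows "R0_linear (ratfun V0 (\<Delta> \<inter> V0))
           (tens (ratfun UNIV \<Delta>) (top_ext (card (UNIV :: 'n set)) UNIV)) \<Delta>
           (tens (ratfun V0 (\<Delta> \<inter> V0)) (top_ext ((card (UNIV :: 'n set)) - 1) V0)) (\<Delta> \<inter> V0)
           (Res z0)
       \<and> res_props (card (UNIV :: 'n set)) \<Delta> V0 (Res z0)
       \<and> (\<forall>res. R0_linear (ratfun V0 (\<Delta> \<inter> V0))
                  (tens (ratfun UNIV \<Delta>) (top_ext (card (UNIV :: 'n set)) UNIV)) \<Delta>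
                  (tens (ratfun V0 (\<Delta> \<inter> V0)) (top_ext ((card (UNIV :: 'n set)) - 1) V0)) (\<Delta> \<inter> V0) res
                \<and> res_props (card (UNIV :: 'n set)) \<Delta> V0 res
              \<longrightarrow> (\<forall>\<Phi>\<in>tens (ratfun UNIV \<Delta>) (top_ext (card (UNIV :: 'n set)) UNIV).
                     eq_off (\<Delta> \<inter> V0) (res \<Phi>) (Res z0 \<Phi>)))"
proof -
  \<comment> \<open>Only finiteness of \<open>\<Delta>\<close> and the description of \<open>V0\<close> are needed.\<close>
  interpret hyperplane \<Delta> z0 V0 using assms(1,5) by unfold_locales
  show ?thesis
    using R0_linear_res_props_iff Res_values_in_Cod admissible_Res admissible_eq_off_Res by blast
qed

end
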